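(* Let $Y$ be a compact metric space with more than one point and let $g\colon Y\to Y$ be a topologically mixing TA-map. Then there exist $\varepsilon>0$, $k\in\mathbb N$ and a dense Mycielski set $T\subset Y$ with $g^k(T)\subset T$ which is syndetically $\varepsilon$-scrambled for $g$.
   Context: A continuous surjection $g\colon Y\to Y$ is c-expansive with constant $\beta>0$ if for any two full orbits $(x_i)_{i\in\mathbb Z},(y_i)_{i\in\mathbb Z}$ ($g(x_i)=x_{i+1}$, $g(y_i)=y_{i+1}$) with $x_0\ne y_0$ there is $n\in\mathbb Z$ with $d(x_n,y_n)>\beta$. $g$ has the shadowing property if for every $\varepsilon>0$ there is $\delta>0$ such that every sequence $(x_i)_{i\ge0}$ with $d(g(x_i),x_{i+1})<\delta$ for all $i$ is $\varepsilon$-traced by some $z$, i.e. $d(g^i(z),x_i)<\varepsilon$ for all $i\ge0$. A TA-map is a c-expansive continuous surjection with shadowing. Mixing: $\{n: g^n(U)\cap V\neq\emptyset\}$ cofinite for all nonempty open $U,V$. Syndetic: subset of $\mathbb N$ meeting every set with arbitrarily long runs of consecutive integers. Syndetically $\varepsilon$-scrambled set: at least two points, every pair of distinct points $x,y$ satisfies $\{n:d(g^nx,g^ny)<\eta\}$ syndetic for all $\eta>0$, $d(g^nx,g^ny)\not\to0$, and $\limsup_n d(g^nx,g^ny)\ge\varepsilon$. Mycielski set: countable union of Cantor sets. *)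

theory Defs
  imports "HOL-Analysis.Analysis" "HOL-Library.Liminf_Limsup"
begin

definition full_orbit :: "'a set \<Rightarrow> ('a \<Rightarrow> 'a) \<Rightarrow> (int \<Rightarrow> 'a) \<Rightarrow> bool" where
  "full_orbit Y g x \<longleftrightarrow> (\<forall>i. x i \<in> Y \<and> g (x i) = x (i + 1))"

definition c_expansive_with :: "'a::metric_space set \<Rightarrow> ('a \<Rightarrow> 'a) \<Rightarrow> real \<Rightarrow> bool" where
  "c_expansive_with Y g \<beta> \<longleftrightarrow> \<beta> > 0 \<and>
     (\<forall>x y. full_orbit Y g x \<and> full_orbit Y g y \<and> x 0 \<noteq> y 0 \<longrightarrow>
        (\<exists>n::int. dist (x n) (y n) > \<beta>))"

definition continuous_surjection :: "'a::metric_space set \<Rightarrow> ('a \<Rightarrow> 'a) \<Rightarrow> bool" where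
  "continuous_surjection Y g \<longleftrightarrow> continuous_on Y g \<and> g ` Y = Y"

definition c_expansive :: "'a::metric_space set \<Rightarrow> ('a \<Rightarrow> 'a) \<Rightarrow> bool" where
  "c_expansive Y g \<longleftrightarrow> continuous_surjection Y g \<and> (\<exists>\<beta>. c_expansive_with Y g \<beta>)"

definition shadowing :: "'a::metric_space set \<Rightarrow> ('a \<Rightarrow> 'a) \<Rightarrow> bool" where
  "shadowing Y g \<longleftrightarrow>
     (\<forall>\<epsilon>>0. \<exists>\<delta>>0. \<forall>x::nat \<Rightarrow> 'a.
        (\<forall>i. x i \<in> Y) \<and> (\<forall>i. dist (g (x i)) (x (Suc i)) < \<delta>) \<longrightarrow>
        (\<exists>z\<in>Y. \<forall>i. dist ((g ^^ i) z) (x i) < \<epsilon>))"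

definition TA_map :: "'a::metric_space set \<Rightarrow> ('a \<Rightarrow> 'a) \<Rightarrow> bool" where
  "TA_map Y g \<longleftrightarrow> c_expansive Y g \<and> shadowing Y g"

definition top_mixing :: "'a::metric_space set \<Rightarrow> ('a \<Rightarrow> 'a) \<Rightarrow> bool" where
  "top_mixing Y g \<longleftrightarrow>
     (\<forall>U V. openin (top_of_set Y) U \<and> U \<noteq> {} \<and> openin (top_of_set Y) V \<and> V \<noteq> {} \<longrightarrow>
        finite {n. (g ^^ n) ` U \<inter> V = {}})"

definition thick :: "nat set \<Rightarrow> bool" where
  "thick A \<longleftrightarrow> (\<forall>L. \<exists>m. {m..<m+L} \<subseteq> A)"

definition syndetic :: "nat set \<Rightarrow> bool" where
  "syndetic S \<longleftrightarrow> (\<forall>A. thick A \<longrightarrow> S \<inter> A \<noteq> {})"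

definition synd_scrambled :: "'a::metric_space set \<Rightarrow> ('a \<Rightarrow> 'a) \<Rightarrow> real \<Rightarrow> 'a set \<Rightarrow> bool" where
  "synd_scrambled Y g \<epsilon> T \<longleftrightarrow>
     (\<exists>x\<in>T. \<exists>y\<in>T. x \<noteq> y) \<and>
     (\<forall>x\<in>T. \<forall>y\<in>T. x \<noteq> y \<longrightarrow>
        (\<forall>\<eta>>0. syndetic {n. dist ((g ^^ n) x) ((g ^^ n) y) < \<eta>}) \<and>
        \<not> ((\<lambda>n. dist ((g ^^ n) x) ((g ^^ n) y)) \<longlonglongrightarrow> 0) \<and>
        limsup (\<lambda>n. ereal (dist ((g ^^ n) x) ((g ^^ n) y))) \<ge> ereal \<epsilon>)"

definition cantor_set :: "'a::metric_space set \<Rightarrow> bool" where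
  "cantor_set C \<longleftrightarrow>
     top_of_set C homeomorphic_space
       product_topology (\<lambda>_::nat. discrete_topology (UNIV::bool set)) UNIV"

definition mycielski_set :: "'a::metric_space set \<Rightarrow> bool" where
  "mycielski_set T \<longleftrightarrow> (\<exists>\<C>. countable \<C> \<and> (\<forall>C\<in>\<C>. cantor_set C) \<and> T = \<Union>\<C>)"

end

theory Submission
  imports Defs
begin

lemma nested_compact_Inter_nonempty:
  fixes F :: "nat \<Rightarrow> 'b::metric_space set"
  assumes "\<And>n. compact (F n)" "\<And>n. F n \<noteq> {}" "\<And>n. F (Suc n) \<subseteq> F n"
  shows "\<exists>x. \<forall>n. x \<in> F n"
proof -
  have mono: "F n \<subseteq> F m" if "m \<le> n" for m n
    using that lift_Suc_antimono_le[of F, OF assms(3)] by blast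
  have "F 0 \<inter> (\<Inter>i\<in>UNIV. F i) \<noteq> {}"
  proof (rule compact_imp_fip_image[OF assms(1)])
    show "closed (F i)" for i using assms(1) compact_imp_closed by blast
    fix I' :: "nat set" assume "finite I'"
    have "F (Max (insert 0 I')) \<subseteq> F 0 \<inter> (\<Inter>i\<in>I'. F i)"
    proof
      fix x assume x: "x \<in> F (Max (insert 0 I'))"
      have "x \<in> F i" if "i \<in> insert 0 I'" for i
        using mono[of i "Max (insert 0 I')"] x that \<open>finite I'\<close> by auto
      then show "x \<in> F 0 \<inter> (\<Inter>i\<in>I'. F i)" by auto
    qed
    then show "F 0 \<inter> (\<Inter>i\<in>I'. F i) \<noteq> {}" using assms(2) by blast
  qed
  then show ?thesis by auto
qed

lemma backward_orbit_through:
  fixes R :: "int \<Rightarrow> 'b \<Rightarrow> bool"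
  assumes start: "R 0 x0"
    and backward: "\<And>t x. R t x \<Longrightarrow> \<exists>x'. R (t - 1) x' \<and> g x' = x"
  shows "\<exists>b. b 0 = x0 \<and> (\<forall>n. R (- int n) (b n) \<and> g (b (Suc n)) = b n)"
proof -
  define b where "b = rec_nat x0 (\<lambda>n y. SOME x'. R (- int n - 1) x' \<and> g x' = y)"
  have b0: "b 0 = x0" by (simp add: b_def)
  have step: "R (- int (Suc n)) (b (Suc n)) \<and> g (b (Suc n)) = b n" if "R (- int n) (b n)" for n
  proof -
    have "\<exists>x'. R (- int n - 1) x' \<and> g x' = b n" using backward[OF that] by simp
    from someI_ex[OF this] have "R (- int n - 1) (b (Suc n)) \<and> g (b (Suc n)) = b n"
      by (simp add: b_def)
    moreover have "- int n - 1 = - int (Suc n)" by simp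
    ultimately show ?thesis by metis
  qed
  have "R (- int n) (b n)" for n
    by (induction n) (use start b0 step in auto)
  then show ?thesis using b0 step by blast
qed

lemma bi_infinite_orbit_through:
  fixes R :: "int \<Rightarrow> 'b \<Rightarrow> bool"
  assumes start: "R 0 x0"
    and forward: "\<And>t x. R t x \<Longrightarrow> R (t + 1) (g x)"
    and backward: "\<And>t x. R t x \<Longrightarrow> \<exists>x'. R (t - 1) x' \<and> g x' = x"
  shows "\<exists>X. \<forall>t. R t (X t) \<and> g (X t) = X (t + 1)"
proof -
  obtain b where b: "b 0 = x0" "\<And>n. R (- int n) (b n)" "\<And>n. g (b (Suc n)) = b n"
    using backward_orbit_through[of R x0 g, OF start backward] by blast
  have future: "R (int n) ((g^^n) x0)" for n
  proof (induction n)
    case (Suc n)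
    from forward[OF this] show ?case by (simp add: add.commute)
  qed (simp add: start)
  define X where "X t = (if t \<ge> 0 then (g^^nat t) x0 else b (nat (- t)))" for t
  have "R t (X t)" for t
    using future[of "nat t"] b(2)[of "nat (- t)"] by (cases "t \<ge> 0") (simp_all add: X_def)
  moreover have "g (X t) = X (t + 1)" for t
  proof -
    consider "t \<ge> 0" | "t = -1" | "t < -1" by linarith
    then show ?thesis
    proof cases
      case 1
      then have "nat (t + 1) = Suc (nat t)" by simp
      then show ?thesis using 1 by (simp add: X_def)
    next
      case 2
      then show ?thesis using b(1) b(3)[of 0] by (simp add: X_def)
    next
      case 3
      then have "nat (- t) = Suc (nat (- (t + 1)))" by simp
      then show ?thesis using b(3)[of "nat (- (t + 1))"] 3 by (simp add: X_def)
    qed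
  qed
  ultimately show ?thesis by blast
qed

lemma full_orbit_in: "full_orbit Y g X \<Longrightarrow> X t \<in> Y"
  unfolding full_orbit_def by blast

lemma full_orbit_shift: "full_orbit Y g X \<Longrightarrow> X (t + int i) = (g^^i) (X t)"
  unfolding full_orbit_def
proof (induction i)
  case (Suc i)
  then have "X (t + int i + 1) = g ((g ^^ i) (X t))" by metis
  then show ?case by (simp add: ac_simps)
qed simp

lemma full_orbit_translate: "full_orbit Y g X \<Longrightarrow> full_orbit Y g (\<lambda>i. X (i + s))"
  unfolding full_orbit_def by (simp add: algebra_simps)

lemma periodic_extension_chain:
  assumes N: "N > 0" and closed: "c N = c 0"
    and step: "\<And>i. i < N \<Longrightarrow> S (c i) (c (Suc i))"
  shows "S (c (nat (t mod int N))) (c (nat ((t + 1) mod int N)))"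
proof -
  have "(t + 1) mod int N = (t mod int N + 1) mod int N" by (simp add: mod_add_left_eq)
  moreover have r: "0 \<le> t mod int N" "t mod int N < int N" using N by auto
  ultimately have succ: "(t + 1) mod int N = (if t mod int N = int N - 1 then 0 else t mod int N + 1)"
    by auto
  show ?thesis
  proof (cases "t mod int N = int N - 1")
    case True
    then have "nat (t mod int N) = N - 1" "nat ((t + 1) mod int N) = 0" using succ by auto
    moreover have "S (c (N - 1)) (c N)" using step[of "N - 1"] N by simp
    ultimately show ?thesis using closed by simp
  next
    case False
    then have "nat ((t + 1) mod int N) = Suc (nat (t mod int N))" "nat (t mod int N) < N"
      using r succ by auto
    then show ?thesis using step by simp
  qed
qed

lemma long_step_on_progression:
  fixes X :: "int \<Rightarrow> 'b::metric_space"
  assumes "dist (X t0) (X (t0 + int n * h)) > real n * c"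
  shows "\<exists>q<n. dist (X (t0 + int q * h)) (X (t0 + int q * h + h)) > c"
proof (rule ccontr)
  assume "\<not> ?thesis"
  then have short: "dist (X (t0 + int q * h)) (X (t0 + int (Suc q) * h)) \<le> c" if "q < n" for q
    using that by (auto simp: algebra_simps)
  have "dist (X t0) (X (t0 + int m * h)) \<le> real m * c" if "m \<le> n" for m
    using that
  proof (induction m)
    case (Suc m)
    have "dist (X t0) (X (t0 + int (Suc m) * h))
        \<le> dist (X t0) (X (t0 + int m * h)) + dist (X (t0 + int m * h)) (X (t0 + int (Suc m) * h))"
      by (rule dist_triangle)
    also have "\<dots> \<le> real m * c + c" using Suc short[of m] by (intro add_mono) auto
    finally show ?case by (simp add: algebra_simps)
  qed simp
  then show False using assms by (meson not_le order_refl)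
qed

lemma continuous_map_cantor_space:
  fixes F :: "(nat \<Rightarrow> bool) \<Rightarrow> 'a::metric_space"
  assumes prefix: "\<And>s e. e > 0 \<Longrightarrow> \<exists>K. \<forall>s'. (\<forall>i<K. s' i = s i) \<longrightarrow> dist (F s') (F s) < e"
  shows "continuous_map (product_topology (\<lambda>_::nat. discrete_topology (UNIV::bool set)) UNIV)
           euclidean F"
  unfolding continuous_map_def
proof (intro conjI allI impI)
  let ?PT = "product_topology (\<lambda>_::nat. discrete_topology (UNIV::bool set)) UNIV"
  have tops: "topspace ?PT = UNIV" by (simp add: PiE_UNIV_domain)
  show "F \<in> topspace ?PT \<rightarrow> topspace euclidean" by simp
  fix U :: "'a set" assume "openin euclidean U"
  then have U: "open U" by simp
  show "openin ?PT {x \<in> topspace ?PT. F x \<in> U}"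
    unfolding openin_product_topology_alt
  proof (intro ballI)
    fix s assume "s \<in> {x \<in> topspace ?PT. F x \<in> U}"
    then obtain e where e: "e > 0" "ball (F s) e \<subseteq> U" using U open_contains_ball by force
    obtain K where K: "\<And>s'. (\<forall>i<K. s' i = s i) \<Longrightarrow> dist (F s') (F s) < e" using prefix[OF e(1)] by blast
    define V where "V i = (if i < K then {s i} else UNIV)" for i
    have "finite {i \<in> UNIV. V i \<noteq> topspace (discrete_topology UNIV)}"
      by (rule finite_subset[of _ "{..<K}"]) (auto simp: V_def)
    moreover have "\<forall>i\<in>UNIV. openin (discrete_topology UNIV) (V i)" by simp
    moreover have "s \<in> Pi\<^sub>E UNIV V" by (simp add: V_def PiE_iff)
    moreover have "Pi\<^sub>E UNIV V \<subseteq> {x \<in> topspace ?PT. F x \<in> U}"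
    proof
      fix s' assume "s' \<in> Pi\<^sub>E UNIV V"
      then have "\<forall>i. s' i \<in> V i" by (simp add: PiE_iff)
      then have "\<forall>i<K. s' i = s i" unfolding V_def by (metis singletonD)
      then have "F s' \<in> ball (F s) e" using K by (simp add: dist_commute)
      then show "s' \<in> {x \<in> topspace ?PT. F x \<in> U}" using e(2) tops by auto
    qed
    ultimately show "\<exists>V. finite {i \<in> UNIV. V i \<noteq> topspace (discrete_topology UNIV)} \<and>
               (\<forall>i\<in>UNIV. openin (discrete_topology UNIV) (V i)) \<and> s \<in> Pi\<^sub>E UNIV V \<and>
               Pi\<^sub>E UNIV V \<subseteq> {x \<in> topspace ?PT. F x \<in> U}" by blast
  qed
qed

lemma cantor_set_image:
  fixes F :: "(nat \<Rightarrow> bool) \<Rightarrow> 'a::metric_space"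
  assumes inj: "inj F"
    and prefix: "\<And>s e. e > 0 \<Longrightarrow> \<exists>K. \<forall>s'. (\<forall>i<K. s' i = s i) \<longrightarrow> dist (F s') (F s) < e"
  shows "cantor_set (range F)"
proof -
  let ?PT = "product_topology (\<lambda>_::nat. discrete_topology (UNIV::bool set)) UNIV"
  have tops: "topspace ?PT = UNIV" by (simp add: PiE_UNIV_domain)
  have "compact_space ?PT"
    by (simp add: compact_space_product_topology compact_space_discrete_topology)
  then have "embedding_map ?PT euclidean F"
    using continuous_imp_embedding_map[OF continuous_map_cantor_space[OF prefix]] inj
    by (auto simp: tops)
  from embedding_map_imp_homeomorphic_space[OF this]
  have "?PT homeomorphic_space top_of_set (range F)" unfolding tops by simp
  then show ?thesis unfolding cantor_set_def by (rule homeomorphic_space_sym[THEN iffD1])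
qed

text \<open>The code of a pair \<open>(l, s)\<close>: it is always true at \<open>0\<close>, carries \<open>s\<close> on the odd positions and
  the indicator of \<open>l\<close> on the even positions; distinct pairs get distinct codes, and the code
  depends continuously on \<open>s\<close>.\<close>
definition code :: "nat \<Rightarrow> (nat \<Rightarrow> bool) \<Rightarrow> nat \<Rightarrow> bool" where
  "code l s i = (if i = 0 then True else if odd i then s ((i - 1) div 2) else (i div 2 - 1 = l))"

lemma code_0: "code l s 0" unfolding code_def by simp

lemma code_inj: "code l s = code l' s' \<Longrightarrow> l = l' \<and> s = s'"
proof -
  assume e: "code l s = code l' s'"
  have "code l s (2*l+2) = code l' s' (2*l+2)" using e by simp
  then have "l = l'" unfolding code_def by simp
  moreover have "s q = s' q" for q
    using fun_cong[OF e, of "2*q+1"] unfolding code_def by simp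
  ultimately show ?thesis by blast
qed

lemma code_prefix: "\<forall>i<K. s' i = s i \<Longrightarrow> \<forall>i<K. code l s' i = code l s i"
  unfolding code_def by (metis div_le_dividend le_less_trans linorder_not_le diff_le_self)

locale compact_system =
  fixes Y :: "'a::metric_space set" and g :: "'a \<Rightarrow> 'a"
  assumes compact_Y: "compact Y" and continuous_g: "continuous_on Y g" and g_into: "g ` Y \<subseteq> Y"
begin

lemma funpow_in: "x \<in> Y \<Longrightarrow> (g^^n) x \<in> Y"
  by (induction n) (use g_into in auto)

lemma continuous_on_funpow: "continuous_on Y (g^^n)"
proof (induction n)
  case (Suc n)
  then show ?case
    using funpow_in by (auto intro: continuous_on_compose2[OF continuous_g])
qed simp

lemma finite_ball_cover:
  assumes "r > 0" shows "\<exists>F. finite F \<and> F \<subseteq> Y \<and> Y \<subseteq> (\<Union>x\<in>F. ball x r)"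
  using seq_compact_imp_totally_bounded[OF compact_imp_seq_compact[OF compact_Y]] assms by blast

text \<open>The points whose first \<open>2n\<close> iterates obey the constraints \<open>C (t - n + i)\<close>, pushed
  forward \<open>n\<close> steps: candidates for the position at time \<open>t\<close> of an orbit meeting every
  constraint in the time window \<open>[t - n, t + n]\<close>.\<close>
definition window_image :: "(int \<Rightarrow> 'a set) \<Rightarrow> int \<Rightarrow> nat \<Rightarrow> 'a set" where
  "window_image C t n = (g^^n) ` {w\<in>Y. \<forall>i\<le>2*n. (g^^i) w \<in> C (t - int n + int i)}"

lemma compact_window_image:
  assumes "\<And>t. closed (C t)"
  shows "compact (window_image C t n)"
proof -
  have "closed (Y \<inter> (g^^i) -` C (t - int n + int i))" for i
    using continuous_closed_preimage[OF continuous_on_funpow compact_imp_closed[OF compact_Y] assms] .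
  then have "compact (Y \<inter> (\<Inter>i\<in>{..2*n}. Y \<inter> (g^^i) -` C (t - int n + int i)))"
    by (intro compact_Int_closed[OF compact_Y] closed_INT) auto
  moreover have "{w\<in>Y. \<forall>i\<le>2*n. (g^^i) w \<in> C (t - int n + int i)}
      = Y \<inter> (\<Inter>i\<in>{..2*n}. Y \<inter> (g^^i) -` C (t - int n + int i))" by auto
  ultimately have "compact {w\<in>Y. \<forall>i\<le>2*n. (g^^i) w \<in> C (t - int n + int i)}" by simp
  then show ?thesis unfolding window_image_def
    by (rule compact_continuous_image[rotated])
      (rule continuous_on_subset[OF continuous_on_funpow], blast)
qed

lemma window_image_decreasing: "window_image C t (Suc n) \<subseteq> window_image C t n"
proof
  fix x assume "x \<in> window_image C t (Suc n)"
  then obtain w where w: "w \<in> Y" "x = (g^^Suc n) w"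
    "\<And>i. i \<le> 2 * Suc n \<Longrightarrow> (g^^i) w \<in> C (t - int (Suc n) + int i)"
    unfolding window_image_def by blast
  have "(g^^i) (g w) \<in> C (t - int n + int i)" if "i \<le> 2*n" for i
    using w(3)[of "Suc i"] that by (simp add: funpow_swap1 algebra_simps)
  moreover have "g w \<in> Y" "x = (g^^n) (g w)" using w(1,2) g_into by (auto simp: funpow_swap1)
  ultimately show "x \<in> window_image C t n" unfolding window_image_def by blast
qed

definition extendable :: "(int \<Rightarrow> 'a set) \<Rightarrow> int \<Rightarrow> 'a \<Rightarrow> bool" where
  "extendable C t x \<longleftrightarrow> x \<in> Y \<and>
     (\<forall>n m. \<exists>w\<in>Y. (g^^n) w = x \<and> (\<forall>i\<le>m. (g^^i) w \<in> C (t - int n + int i)))"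

lemma extendable_if_in_all_windows:
  assumes "x \<in> Y" and "\<And>n. x \<in> window_image C t n"
  shows "extendable C t x"
  unfolding extendable_def
proof (intro conjI allI)
  fix n m
  obtain w where w: "w \<in> Y" "(g^^(n+m)) w = x"
    "\<And>i. i\<le>2*(n+m) \<Longrightarrow> (g^^i) w \<in> C (t - int (n+m) + int i)"
    using assms(2)[of "n+m"] unfolding window_image_def by blast
  have "(g^^i) ((g^^m) w) \<in> C (t - int n + int i)" if "i \<le> m" for i
    using w(3)[of "i+m"] that by (simp add: funpow_add algebra_simps)
  moreover have "(g^^n) ((g^^m) w) = x" using w(2) by (simp add: funpow_add)
  ultimately show "\<exists>w\<in>Y. (g^^n) w = x \<and> (\<forall>i\<le>m. (g^^i) w \<in> C (t - int n + int i))"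
    using funpow_in[OF w(1)] by blast
qed (fact assms(1))

lemma extendable_in_constraint:
  assumes "extendable C t x" shows "x \<in> C t"
proof -
  obtain w where "(g^^0) w = x" "\<forall>i\<le>0. (g^^i) w \<in> C (t - int 0 + int i)"
    using assms unfolding extendable_def by blast
  then show ?thesis by simp
qed

lemma extendable_step:
  assumes "extendable C t x"
  shows "extendable C (t + 1) (g x)"
  unfolding extendable_def
proof (intro conjI allI)
  show "g x \<in> Y" using assms g_into unfolding extendable_def by blast
  fix n m
  show "\<exists>w\<in>Y. (g^^n) w = g x \<and> (\<forall>i\<le>m. (g^^i) w \<in> C (t + 1 - int n + int i))"
  proof (cases n)
    case 0
    obtain w where w: "w \<in> Y" "(g^^0) w = x"
      "\<And>i. i \<le> Suc m \<Longrightarrow> (g^^i) w \<in> C (t - int 0 + int i)"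
      using assms unfolding extendable_def by blast
    have "(g^^i) (g x) \<in> C (t + 1 - int n + int i)" if "i \<le> m" for i
      using w(3)[of "Suc i"] w(2) that 0 by (simp add: funpow_swap1 algebra_simps)
    then show ?thesis using 0 g_into w(1,2) by auto
  next
    case (Suc n')
    obtain w where "w \<in> Y" "(g^^n') w = x" "\<And>i. i \<le> m \<Longrightarrow> (g^^i) w \<in> C (t - int n' + int i)"
      using assms unfolding extendable_def by blast
    then show ?thesis using Suc by (auto simp: algebra_simps)
  qed
qed

lemma extendable_preimage:
  assumes closed_C: "\<And>t. closed (C t)" and x: "extendable C t x"
  shows "\<exists>x'. extendable C (t - 1) x' \<and> g x' = x"
proof -
  define M where "M j = {x'\<in>Y. g x' = x} \<inter> window_image C (t - 1) j" for j
  have "\<exists>x'. \<forall>j. x' \<in> M j"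
  proof (rule nested_compact_Inter_nonempty)
    have "closed {x'\<in>Y. g x' = x}"
      using continuous_closed_preimage[OF continuous_g compact_imp_closed[OF compact_Y], of "{x}"]
      by (simp add: vimage_def Int_def)
    then show "compact (M j)" for j
      unfolding M_def by (intro closed_Int_compact compact_window_image closed_C)
    show "M (Suc j) \<subseteq> M j" for j using window_image_decreasing unfolding M_def by blast
    show "M j \<noteq> {}" for j
    proof -
      obtain w where w: "w \<in> Y" "(g^^Suc j) w = x"
        "\<And>i. i\<le>2*j \<Longrightarrow> (g^^i) w \<in> C (t - int (Suc j) + int i)"
        using x unfolding extendable_def by blast
      then have "(g^^j) w \<in> window_image C (t - 1) j"
        unfolding window_image_def by (auto simp: algebra_simps)
      moreover have "g ((g^^j) w) = x" using w(2) by simp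
      ultimately show ?thesis using funpow_in[OF w(1)] unfolding M_def by blast
    qed
  qed
  then obtain x' where x': "\<And>j. x' \<in> M j" by blast
  then have "extendable C (t - 1) x'"
    by (intro extendable_if_in_all_windows) (auto simp: M_def)
  moreover have "g x' = x" using x'[of 0] unfolding M_def by auto
  ultimately show ?thesis by blast
qed

theorem full_orbit_through_constraints:
  assumes closed_C: "\<And>t. closed (C t)"
    and segments: "\<And>n. \<exists>w\<in>Y. \<forall>i\<le>2*n. (g^^i) w \<in> C (int i - int n)"
  shows "\<exists>X. full_orbit Y g X \<and> (\<forall>t. X t \<in> C t)"
proof -
  have "\<exists>x. \<forall>n. x \<in> window_image C 0 n"
  proof (rule nested_compact_Inter_nonempty)
    show "compact (window_image C 0 n)" for n by (rule compact_window_image[OF closed_C])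
    show "window_image C 0 n \<noteq> {}" for n
      using segments[of n] unfolding window_image_def by auto
    show "window_image C 0 (Suc n) \<subseteq> window_image C 0 n" for n
      by (rule window_image_decreasing)
  qed
  then obtain x0 where "\<And>n. x0 \<in> window_image C 0 n" by blast
  moreover have "window_image C 0 0 \<subseteq> Y" unfolding window_image_def by auto
  ultimately have "extendable C 0 x0" by (intro extendable_if_in_all_windows) auto
  then have "\<exists>X. \<forall>t. extendable C t (X t) \<and> g (X t) = X (t + 1)"
    by (rule bi_infinite_orbit_through[where R = "extendable C"])
      (use extendable_step extendable_preimage[OF closed_C] in auto)
  then obtain X where X: "\<And>t. extendable C t (X t)" "\<And>t. g (X t) = X (t + 1)" by blast
  have "full_orbit Y g X"
    unfolding full_orbit_def using X extendable_def by blast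
  moreover have "X t \<in> C t" for t using extendable_in_constraint[OF X(1)] .
  ultimately show ?thesis by blast
qed

end

locale mixing_TA_system = compact_system Y g
  for Y :: "'a::metric_space set" and g :: "'a \<Rightarrow> 'a" +
  fixes \<beta> :: real
  assumes onto: "g ` Y = Y" and expansive: "c_expansive_with Y g \<beta>"
    and shadow: "shadowing Y g" and mixing: "top_mixing Y g"
    and nontrivial: "\<exists>a\<in>Y. \<exists>b\<in>Y. a \<noteq> b"
begin

lemma beta_pos: "\<beta> > 0"
  using expansive unfolding c_expansive_with_def by blast

lemma funpow_onto: "(g^^n) ` Y = Y"
proof (induction n)
  case (Suc n)
  have "(g^^Suc n) ` Y = g ` ((g^^n) ` Y)" by (simp add: image_comp)
  then show ?case using Suc onto by simp
qed simp

text \<open>Surjectivity lets every point be continued to the past.\<close>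
lemma full_orbit_through_point:
  assumes "x \<in> Y" shows "\<exists>X. full_orbit Y g X \<and> X 0 = x"
proof -
  define C where "C t = (if t = 0 then {x} else Y)" for t :: int
  have "\<exists>X. full_orbit Y g X \<and> (\<forall>t. X t \<in> C t)"
  proof (rule full_orbit_through_constraints)
    show "closed (C t)" for t unfolding C_def using compact_imp_closed[OF compact_Y] by auto
    fix n
    obtain w where w: "w \<in> Y" "(g^^n) w = x" using funpow_onto[of n] assms by (metis imageE)
    have "(g^^i) w \<in> C (int i - int n)" for i
      using w funpow_in[OF w(1)] unfolding C_def by auto
    then show "\<exists>w\<in>Y. \<forall>i\<le>2*n. (g^^i) w \<in> C (int i - int n)" using w(1) by blast
  qed
  then show ?thesis unfolding C_def by (metis singletonD)
qed

text \<open>Shadowing of bi-infinite pseudo-orbits by full orbits, obtained from one-sided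
  shadowing of all their tails and the compactness principle.\<close>
lemma shadowing_bi_infinite:
  assumes "\<gamma> > 0"
  shows "\<exists>\<delta>>0. \<forall>y::int\<Rightarrow>'a. (\<forall>t. y t \<in> Y) \<and> (\<forall>t. dist (g (y t)) (y (t+1)) < \<delta>) \<longrightarrow>
           (\<exists>X. full_orbit Y g X \<and> (\<forall>t. dist (X t) (y t) \<le> \<gamma>))"
proof -
  obtain \<delta> where \<delta>: "\<delta> > 0" "\<forall>x::nat\<Rightarrow>'a. (\<forall>i. x i \<in> Y) \<and> (\<forall>i. dist (g (x i)) (x (Suc i)) < \<delta>) \<longrightarrow>
        (\<exists>z\<in>Y. \<forall>i. dist ((g ^^ i) z) (x i) < \<gamma>)"
    using shadow assms unfolding shadowing_def by blast
  have "\<exists>X. full_orbit Y g X \<and> (\<forall>t. dist (X t) (y t) \<le> \<gamma>)"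
    if y: "\<forall>t. y t \<in> Y" "\<forall>t. dist (g (y t)) (y (t+1)) < \<delta>" for y
  proof -
    have "\<exists>X. full_orbit Y g X \<and> (\<forall>t. X t \<in> cball (y t) \<gamma>)"
    proof (rule full_orbit_through_constraints)
      show "closed (cball (y t) \<gamma>)" for t by simp
      fix n
      define x where "x i = y (int i - int n)" for i
      have "\<forall>i. x i \<in> Y" using y unfolding x_def by auto
      moreover have "\<forall>i. dist (g (x i)) (x (Suc i)) < \<delta>"
        using y(2) unfolding x_def by (metis add.commute add_diff_eq of_nat_Suc)
      ultimately obtain z where "z \<in> Y" "\<And>i. dist ((g ^^ i) z) (x i) < \<gamma>" using \<delta>(2) by blast
      then show "\<exists>w\<in>Y. \<forall>i\<le>2*n. (g^^i) w \<in> cball (y (int i - int n)) \<gamma>"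
        unfolding x_def mem_cball by (metis dist_commute less_imp_le)
    qed
    then show ?thesis by (auto simp: dist_commute)
  qed
  then show ?thesis using \<delta>(1) by blast
qed

lemma expansive_orbits_eq:
  assumes "full_orbit Y g X" "full_orbit Y g X'" "\<And>t. dist (X t) (X' t) \<le> \<beta>"
  shows "X t = X' t"
proof (rule ccontr)
  assume ne: "X t \<noteq> X' t"
  have "\<exists>n::int. dist (X (n + t)) (X' (n + t)) > \<beta>"
    using expansive full_orbit_translate[OF assms(1), of t] full_orbit_translate[OF assms(2), of t] ne
    unfolding c_expansive_with_def by auto
  then show False using assms(3) by (meson not_le)
qed

definition expansive_window :: "nat \<Rightarrow> real \<Rightarrow> bool" where
  "expansive_window L \<eta> \<longleftrightarrow> (\<forall>u\<in>Y. \<forall>v\<in>Y. (\<forall>i\<le>2*L. dist ((g^^i) u) ((g^^i) v) \<le> \<beta>) \<longrightarrow>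
            dist ((g^^L) u) ((g^^L) v) < \<eta>)"

lemma uniform_expansivity:
  assumes "\<eta> > 0"
  shows "\<exists>L. expansive_window L \<eta>"
proof (rule ccontr)
  assume no_window: "\<nexists>L. expansive_window L \<eta>"
  define G where "G = (\<lambda>p::'a\<times>'a. (g (fst p), g (snd p)))"
  have G_pow: "(G^^i) (u, v) = ((g^^i) u, (g^^i) v)" for i u v
    by (induction i) (auto simp: G_def)
  interpret pair: compact_system "Y \<times> Y" G
  proof
    show "compact (Y \<times> Y)" using compact_Y by (simp add: compact_Times)
    show "continuous_on (Y \<times> Y) G" unfolding G_def
      by (intro continuous_on_Pair continuous_on_compose2[OF continuous_g] continuous_on_fst
          continuous_on_snd continuous_on_id) auto
    show "G ` (Y \<times> Y) \<subseteq> Y \<times> Y" unfolding G_def using g_into by auto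
  qed
  define C where "C t = (if t = 0 then {p::'a\<times>'a. dist (fst p) (snd p) \<le> \<beta> \<and> \<eta> \<le> dist (fst p) (snd p)}
                   else {p. dist (fst p) (snd p) \<le> \<beta>})" for t :: int
  have "\<exists>X. full_orbit (Y \<times> Y) G X \<and> (\<forall>t. X t \<in> C t)"
  proof (rule pair.full_orbit_through_constraints)
    have "closed {p::'a\<times>'a. dist (fst p) (snd p) \<le> \<beta>}" "closed {p::'a\<times>'a. \<eta> \<le> dist (fst p) (snd p)}"
      by (intro closed_Collect_le continuous_intros)+
    then show "closed (C t)" for t unfolding C_def by (auto simp: Collect_conj_eq)
    fix n
    from no_window obtain u v where uv: "u \<in> Y" "v \<in> Y"
      "\<And>i. i\<le>2*n \<Longrightarrow> dist ((g^^i) u) ((g^^i) v) \<le> \<beta>" "\<not> dist ((g^^n) u) ((g^^n) v) < \<eta>"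
      unfolding expansive_window_def by blast
    have "(G^^i) (u,v) \<in> C (int i - int n)" if "i \<le> 2*n" for i
      using uv(3)[OF that] uv(4) unfolding G_pow C_def by auto
    then show "\<exists>w\<in>Y\<times>Y. \<forall>i\<le>2*n. (G^^i) w \<in> C (int i - int n)" using uv(1,2) by blast
  qed
  then obtain X where X: "full_orbit (Y \<times> Y) G X" "\<And>t. X t \<in> C t" by blast
  have "full_orbit Y g (\<lambda>t. fst (X t))" "full_orbit Y g (\<lambda>t. snd (X t))"
    using X(1) unfolding full_orbit_def G_def by (metis fst_conv mem_Times_iff, metis snd_conv mem_Times_iff)
  moreover have "dist (fst (X t)) (snd (X t)) \<le> \<beta>" for t
    using X(2)[of t] unfolding C_def by (auto split: if_splits)
  ultimately have "fst (X 0) = snd (X 0)" by (rule expansive_orbits_eq)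
  moreover have "\<eta> \<le> dist (fst (X 0)) (snd (X 0))" using X(2)[of 0] unfolding C_def by auto
  ultimately show False using assms by simp
qed

lemma expansive_window_close:
  assumes X: "full_orbit Y g X" and X': "full_orbit Y g X'" and W: "expansive_window L \<eta>"
    and close: "\<And>s. \<bar>s - t\<bar> \<le> int L \<Longrightarrow> dist (X s) (X' s) \<le> \<beta>"
  shows "dist (X t) (X' t) < \<eta>"
proof -
  let ?u = "X (t - int L)" and ?v = "X' (t - int L)"
  have shift: "(g^^i) ?u = X (t - int L + int i)" "(g^^i) ?v = X' (t - int L + int i)" for i
    using full_orbit_shift[OF X] full_orbit_shift[OF X'] by auto
  have "dist ((g^^i) ?u) ((g^^i) ?v) \<le> \<beta>" if "i \<le> 2*L" for i
    unfolding shift using that by (intro close) auto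
  then have "dist ((g^^L) ?u) ((g^^L) ?v) < \<eta>"
    using W full_orbit_in[OF X] full_orbit_in[OF X'] unfolding expansive_window_def by blast
  then show ?thesis unfolding shift by simp
qed

lemma mixing_eventually:
  assumes "openin (top_of_set Y) U" "U \<noteq> {}" "openin (top_of_set Y) V" "V \<noteq> {}"
  shows "\<exists>B. \<forall>n\<ge>B. (g^^n) ` U \<inter> V \<noteq> {}"
proof -
  have "finite {n. (g^^n) ` U \<inter> V = {}}" using mixing assms unfolding top_mixing_def by blast
  then obtain B where "\<forall>n\<in>{n. (g^^n) ` U \<inter> V = {}}. n < B"
    using finite_nat_set_iff_bounded by blast
  then show ?thesis using leD by blast
qed

definition chain :: "real \<Rightarrow> nat \<Rightarrow> (nat \<Rightarrow> 'a) \<Rightarrow> bool" where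
  "chain \<delta> n c \<longleftrightarrow> (\<forall>i. c i \<in> Y) \<and> (\<forall>i<n. dist (g (c i)) (c (Suc i)) < \<delta>)"

text \<open>A genuine orbit segment \<open>u, \<dots>, g\<^sup>n u\<close> whose ends are close to \<open>a\<close> and \<open>b\<close> becomes a
  \<open>\<delta>\<close>-chain from \<open>a\<close> to \<open>b\<close> after replacing its end points.\<close>
lemma chain_from_orbit_segment:
  assumes ab: "a \<in> Y" "b \<in> Y" and u: "u \<in> Y" and n: "n \<ge> 2"
    and start: "dist (g u) (g a) < \<delta>" and finish: "dist ((g^^n) u) b < \<delta>"
  shows "\<exists>c. c 0 = a \<and> c n = b \<and> chain \<delta> n c"
proof -
  define c where "c i = (if i = 0 then a else if i = n then b else (g^^i) u)" for i
  have "dist (g (c i)) (c (Suc i)) < \<delta>" if i: "i < n" for i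
  proof -
    consider "i = 0" | "0 < i \<and> Suc i < n" | "0 < i \<and> Suc i = n" using i n by linarith
    then show ?thesis
    proof cases
      case 1 then show ?thesis using start n unfolding c_def by (simp add: dist_commute)
    next
      case 2
      have "0 < \<delta>" using start by (meson le_less_trans zero_le_dist)
      with 2 show ?thesis unfolding c_def by simp
    next
      case 3
      then have "g ((g^^i) u) = (g^^n) u" by (metis funpow.simps(2) comp_apply)
      then have "g (c i) = (g^^n) u" "c (Suc i) = b" using 3 unfolding c_def by auto
      then show ?thesis using finish by simp
    qed
  qed
  moreover have "c i \<in> Y" for i unfolding c_def using ab funpow_in[OF u] by auto
  moreover have "c 0 = a" "c n = b" unfolding c_def using n by auto
  ultimately show ?thesis unfolding chain_def by blast
qed

lemma uniform_mixing_time: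
  assumes "finite F" "F \<subseteq> Y" "r > 0"
  shows "\<exists>N. \<forall>c1\<in>F. \<forall>c2\<in>F. \<forall>n\<ge>N. (g^^n) ` (Y \<inter> ball c1 r) \<inter> (Y \<inter> ball c2 r) \<noteq> {}"
proof -
  have "\<exists>B. \<forall>n\<ge>B. (g^^n) ` (Y \<inter> ball (fst q) r) \<inter> (Y \<inter> ball (snd q) r) \<noteq> {}"
    if "q \<in> F \<times> F" for q
  proof (rule mixing_eventually)
    have "fst q \<in> Y \<inter> ball (fst q) r" "snd q \<in> Y \<inter> ball (snd q) r"
      using that assms(2,3) by auto
    then show "Y \<inter> ball (fst q) r \<noteq> {}" "Y \<inter> ball (snd q) r \<noteq> {}" by blast+
  qed (auto simp: openin_open)
  then obtain B where B: "\<And>q n. q \<in> F \<times> F \<Longrightarrow> n \<ge> B q \<Longrightarrow>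
      (g^^n) ` (Y \<inter> ball (fst q) r) \<inter> (Y \<inter> ball (snd q) r) \<noteq> {}" by metis
  have bound: "B (c1, c2) \<le> (\<Sum>q\<in>F\<times>F. B q)" if "c1 \<in> F" "c2 \<in> F" for c1 c2
    using that assms(1) by (intro member_le_sum) auto
  show ?thesis
  proof (intro exI[of _ "\<Sum>q\<in>F\<times>F. B q"] ballI allI impI)
    fix c1 c2 n assume "c1 \<in> F" "c2 \<in> F" "n \<ge> (\<Sum>q\<in>F\<times>F. B q)"
    then show "(g^^n) ` (Y \<inter> ball c1 r) \<inter> (Y \<inter> ball c2 r) \<noteq> {}"
      using B[of "(c1, c2)" n] bound[of c1 c2] by simp
  qed
qed

text \<open>Mixing plus compactness: any two points are joined by \<open>\<delta>\<close>-chains of every sufficiently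
  large length.\<close>
lemma mixing_chains:
  assumes "\<delta> > 0"
  shows "\<exists>N\<ge>2. \<forall>a\<in>Y. \<forall>b\<in>Y. \<forall>n\<ge>N. \<exists>c. c 0 = a \<and> c n = b \<and> chain \<delta> n c"
proof -
  obtain \<rho> where \<rho>: "\<rho> > 0" "\<And>x x'. x\<in>Y \<Longrightarrow> x'\<in>Y \<Longrightarrow> dist x' x < \<rho> \<Longrightarrow> dist (g x') (g x) < \<delta>"
    using uniformly_continuous_onE[OF compact_uniformly_continuous[OF continuous_g compact_Y] assms]
    by blast
  define r where "r = min \<rho> \<delta> / 2"
  have r: "r > 0" "2*r \<le> \<rho>" "2*r \<le> \<delta>" unfolding r_def using \<rho> assms by auto
  obtain F where F: "finite F" "F \<subseteq> Y" "Y \<subseteq> (\<Union>x\<in>F. ball x r)"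
    using finite_ball_cover[OF r(1)] by blast
  obtain N0 where N0: "\<And>c1 c2 n. c1 \<in> F \<Longrightarrow> c2 \<in> F \<Longrightarrow> n \<ge> N0 \<Longrightarrow>
      (g^^n) ` (Y \<inter> ball c1 r) \<inter> (Y \<inter> ball c2 r) \<noteq> {}"
    using uniform_mixing_time[OF F(1,2) r(1)] by blast
  have "\<exists>c. c 0 = a \<and> c n = b \<and> chain \<delta> n c" if ab: "a \<in> Y" "b \<in> Y" and n: "n \<ge> N0 + 2" for a b n
  proof -
    obtain c1 where c1: "c1 \<in> F" "a \<in> ball c1 r" using F(3) ab(1) by blast
    obtain c2 where c2: "c2 \<in> F" "b \<in> ball c2 r" using F(3) ab(2) by blast
    obtain u where u: "u \<in> Y" "dist u c1 < r" "dist ((g^^n) u) c2 < r"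
      using N0[OF c1(1) c2(1), of n] n by (auto simp: dist_commute)
    have "dist u a < \<rho>" using dist_triangle[of u a c1] u(2) c1(2) r(2) by simp
    moreover have "dist ((g^^n) u) b < \<delta>"
      using dist_triangle[of "(g^^n) u" b c2] u(3) c2(2) r(3) by simp
    ultimately show ?thesis
      using chain_from_orbit_segment[OF ab u(1)] \<rho>(2)[OF ab(1) u(1)] n by simp
  qed
  then show ?thesis by (intro exI[of _ "N0 + 2"]) auto
qed

end

context mixing_TA_system
begin

text \<open>Closing a \<open>\<delta>\<close>-chain from a point to itself and shadowing its periodic extension gives,
  by expansivity, a periodic point.\<close>
lemma periodic_point: "\<exists>p k. p \<in> Y \<and> k \<ge> 1 \<and> (g^^k) p = p"
proof -
  have "\<beta>/2 > 0" using beta_pos by simp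
  from shadowing_bi_infinite[OF this] obtain \<delta> where \<delta>: "\<delta> > 0"
    "\<And>y::int\<Rightarrow>'a. (\<forall>t. y t \<in> Y) \<Longrightarrow> (\<forall>t. dist (g (y t)) (y (t+1)) < \<delta>) \<Longrightarrow>
       (\<exists>X. full_orbit Y g X \<and> (\<forall>t. dist (X t) (y t) \<le> \<beta>/2))"
    by blast
  obtain N where N: "N \<ge> 2" "\<forall>a\<in>Y. \<forall>b\<in>Y. \<forall>n\<ge>N. \<exists>c. c 0 = a \<and> c n = b \<and> chain \<delta> n c"
    using mixing_chains[OF \<delta>(1)] by blast
  obtain w where w: "w \<in> Y" using nontrivial by blast
  obtain c where c: "c 0 = w" "c N = w" "chain \<delta> N c" using N(2) w by blast
  define y where "y t = c (nat (t mod int N))" for t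
  have "dist (g (y t)) (y (t+1)) < \<delta>" for t
    unfolding y_def using c N(1) unfolding chain_def
    by (intro periodic_extension_chain[where S = "\<lambda>a b. dist (g a) b < \<delta>"]) auto
  moreover have "y t \<in> Y" for t using c(3) unfolding y_def chain_def by simp
  ultimately have "\<exists>X. full_orbit Y g X \<and> (\<forall>t. dist (X t) (y t) \<le> \<beta>/2)"
    using \<delta>(2)[of y] by blast
  then obtain X where X: "full_orbit Y g X" "\<And>t. dist (X t) (y t) \<le> \<beta>/2" by blast
  have "dist (X t) (X (t + int N)) \<le> \<beta>" for t
  proof -
    have "y (t + int N) = y t" unfolding y_def by simp
    then show ?thesis
      using dist_triangle2[of "X t" "X (t + int N)" "y t"] X(2)[of t] X(2)[of "t + int N"] by simp
  qed
  from expansive_orbits_eq[OF X(1) full_orbit_translate[OF X(1)] this, of 0]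
  have "X 0 = (g^^N) (X 0)" using full_orbit_shift[OF X(1), of 0 N] by simp
  then show ?thesis using full_orbit_in[OF X(1)] N(1) by (metis le_trans one_le_numeral)
qed

text \<open>A mixing map on a space with two points has no isolated points; here we only need
  that the space is infinite.\<close>
lemma Y_infinite: "infinite Y"
proof
  assume fin: "finite Y"
  obtain y1 y2 where y: "y1 \<in> Y" "y2 \<in> Y" "y1 \<noteq> y2" using nontrivial by blast
  have isolated: "openin (top_of_set Y) {y}" if "y \<in> Y" for y
  proof -
    have "closed (Y - {y})" using fin by (simp add: finite_imp_closed)
    then have "open (- (Y - {y}))" by (rule open_Compl)
    moreover have "{y} = Y \<inter> (- (Y - {y}))" using that by auto
    ultimately show ?thesis unfolding openin_open by blast
  qed
  obtain B1 where B1: "\<And>n. n \<ge> B1 \<Longrightarrow> (g^^n) ` {y1} \<inter> {y1} \<noteq> {}"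
    using mixing_eventually[OF isolated[OF y(1)] _ isolated[OF y(1)]] by blast
  obtain B2 where B2: "\<And>n. n \<ge> B2 \<Longrightarrow> (g^^n) ` {y1} \<inter> {y2} \<noteq> {}"
    using mixing_eventually[OF isolated[OF y(1)] _ isolated[OF y(2)]] by blast
  show False using B1[of "B1+B2"] B2[of "B1+B2"] y(3) by auto
qed

lemma dense_sequence: "\<exists>cen::nat\<Rightarrow>'a. (\<forall>i. cen i \<in> Y) \<and> (\<forall>y\<in>Y. \<forall>e>0. \<exists>i. dist y (cen i) < e)"
proof -
  have "\<forall>n::nat. \<exists>F. finite F \<and> F \<subseteq> Y \<and> Y \<subseteq> (\<Union>x\<in>F. ball x (1/(real n+1)))"
    using finite_ball_cover by simp
  then obtain Fs where "\<forall>n. finite (Fs n) \<and> Fs n \<subseteq> Y \<and> Y \<subseteq> (\<Union>x\<in>Fs n. ball x (1/(real n+1)))"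
    by metis
  then have Fs: "\<And>n. finite (Fs n)" "\<And>n. Fs n \<subseteq> Y"
    "\<And>n. Y \<subseteq> (\<Union>x\<in>Fs n. ball x (1/(real n+1)))" by auto
  define S where "S = (\<Union>n. Fs n)"
  have cS: "countable S" unfolding S_def by (rule countable_UN) (auto intro: countable_finite Fs(1))
  have "Fs 0 \<noteq> {}" using nontrivial Fs(3)[of 0] by blast
  then have S_ne: "S \<noteq> {}" unfolding S_def by blast
  have "S \<subseteq> Y" unfolding S_def using Fs(2) by blast
  then have "\<forall>i. from_nat_into S i \<in> Y" using from_nat_into[OF S_ne] by blast
  moreover have "\<exists>i. dist y (from_nat_into S i) < e" if y: "y \<in> Y" and e: "e > 0" for y e
  proof -
    obtain n where n: "inverse (real (Suc n)) < e" using reals_Archimedean[OF e] by blast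
    obtain x where x: "x \<in> Fs n" "dist x y < 1/(real n+1)" using Fs(3)[of n] y by auto
    obtain i where "from_nat_into S i = x" using from_nat_into_surj[OF cS, of x] x(1) unfolding S_def by blast
    moreover have "1/(real n+1) < e" using n by (simp add: inverse_eq_divide add.commute)
    ultimately show ?thesis using x(2) by (metis dist_commute less_trans)
  qed
  ultimately show ?thesis by blast
qed

end

locale excursion_construction = mixing_TA_system +
  fixes p :: 'a and k :: nat and a0 :: 'a and D \<gamma> \<delta> :: real and N :: nat
  assumes p_in: "p \<in> Y" and k_pos: "k \<ge> 1" and p_periodic: "(g^^k) p = p"
    and a0_in: "a0 \<in> Y" and D_pos: "D > 0" and a0_far: "\<And>i. D \<le> dist a0 ((g^^i) p)"
    and gamma_pos: "\<gamma> > 0" and gamma_beta: "2 * \<gamma> \<le> \<beta>" and gamma_D: "4 * \<gamma> \<le> D"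
    and delta_pos: "\<delta> > 0"
    and shadows: "\<forall>y::int\<Rightarrow>'a. (\<forall>t. y t \<in> Y) \<and> (\<forall>t. dist (g (y t)) (y (t+1)) < \<delta>) \<longrightarrow>
               (\<exists>X. full_orbit Y g X \<and> (\<forall>t. dist (X t) (y t) \<le> \<gamma>))"
    and N_ge: "N \<ge> 2"
    and chains: "\<forall>x\<in>Y. \<forall>y\<in>Y. \<forall>n\<ge>N. \<exists>c. c 0 = x \<and> c n = y \<and> chain \<delta> n c"
begin

lemma chain_exists: "x \<in> Y \<Longrightarrow> y \<in> Y \<Longrightarrow> n \<ge> N \<Longrightarrow> \<exists>c. c 0 = x \<and> c n = y \<and> chain \<delta> n c"
  using chains by blast

text \<open>The \<open>j\<close>-th excursion window is \<open>[\<Lambda> j\<^sup>2, \<Lambda> j\<^sup>2 + \<Lambda>)\<close>; its length \<open>\<Lambda>\<close> is a multiple of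
  the period \<open>k\<close>, and the windows become sparser and sparser.\<close>
definition win_len :: nat where "win_len = 2 * k * N"

definition \<Lambda> :: int where "\<Lambda> = int win_len"

definition in_window :: "nat \<Rightarrow> int \<Rightarrow> bool" where
  "in_window j t \<longleftrightarrow> \<Lambda> * (int j)^2 \<le> t \<and> t < \<Lambda> * (int j)^2 + \<Lambda>"

lemma win_len_ge: "win_len \<ge> 2 * N"
  unfolding win_len_def using k_pos by simp

lemma Lam_pos: "\<Lambda> \<ge> 1"
  using win_len_ge N_ge unfolding \<Lambda>_def by linarith

lemma N_less_Lam: "int N < \<Lambda>"
  using win_len_ge N_ge unfolding \<Lambda>_def by linarith

lemma k_dvd_window_start: "int k dvd \<Lambda> * (int j)^2"
  unfolding \<Lambda>_def win_len_def by simp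

lemma Lam_sq_mono: "0 \<le> (x::int) \<Longrightarrow> x \<le> y \<Longrightarrow> \<Lambda> * x^2 \<le> \<Lambda> * y^2"
  using Lam_pos by (intro mult_left_mono power_mono) auto

lemma Lam_square_facts:
  fixes J :: int assumes "J \<ge> 0"
  shows "J \<le> \<Lambda> * J^2" "\<Lambda> * (J + 1)^2 = \<Lambda> * J^2 + 2*(J*\<Lambda>) + \<Lambda>"
    "\<Lambda> * (J - 1)^2 + \<Lambda> = \<Lambda> * J^2 - 2*(J*\<Lambda>) + 2*\<Lambda>" "J \<le> J*\<Lambda>"
    "J \<ge> 1 \<Longrightarrow> \<Lambda> + J - 1 \<le> J*\<Lambda>"
proof -
  have "J \<le> J^2" using assms by (cases "J = 0") (auto simp: power2_eq_square)
  moreover have "J^2 \<le> \<Lambda> * J^2" using Lam_pos by (simp add: mult_le_cancel_right1)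
  ultimately show "J \<le> \<Lambda> * J^2" by linarith
  show "\<Lambda> * (J + 1)^2 = \<Lambda> * J^2 + 2*(J*\<Lambda>) + \<Lambda>"
    "\<Lambda> * (J - 1)^2 + \<Lambda> = \<Lambda> * J^2 - 2*(J*\<Lambda>) + 2*\<Lambda>"
    by (simp_all add: power2_eq_square algebra_simps)
  show "J \<le> J*\<Lambda>" using Lam_pos assms by (simp add: mult_le_cancel_left1)
  assume "J \<ge> 1"
  then have "(J - 1) * (\<Lambda> - 1) \<ge> 0" using Lam_pos by simp
  then show "\<Lambda> + J - 1 \<le> J*\<Lambda>" by (simp add: algebra_simps)
qed

lemma window_gap:
  assumes "j < j'" shows "\<Lambda> * (int j)^2 + 2*(int j*\<Lambda>) + \<Lambda> \<le> \<Lambda> * (int j')^2"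
  using Lam_sq_mono[of "int j + 1" "int j'"] Lam_square_facts(2)[of "int j"] assms by simp

lemma windows_disjoint:
  assumes "in_window j t" "in_window j' t" shows "j = j'"
proof (cases j j' rule: linorder_cases)
  case less
  have "0 \<le> int j * \<Lambda>" using Lam_pos by simp
  then show ?thesis using window_gap[OF less] assms unfolding in_window_def by linarith
next
  case greater
  have "0 \<le> int j' * \<Lambda>" using Lam_pos by simp
  then show ?thesis using window_gap[OF greater] assms unfolding in_window_def by linarith
qed

lemma after_window:
  assumes "j \<ge> 1" shows "\<not> in_window j' (\<Lambda> * (int j)^2 + \<Lambda>)"
proof (cases j' j rule: linorder_cases)
  case less
  have "0 \<le> int j' * \<Lambda>" using Lam_pos by simp
  then show ?thesis using window_gap[OF less] unfolding in_window_def by linarith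
next
  case greater
  have "1 * 1 \<le> int j * \<Lambda>" using Lam_pos assms by (intro mult_mono) auto
  then show ?thesis using window_gap[OF greater] unfolding in_window_def by linarith
qed (simp add: in_window_def)

lemma only_window_near:
  assumes "\<Lambda> * (int j - 1)^2 + \<Lambda> \<le> t" "t < \<Lambda> * (int j + 1)^2" "in_window j' t"
  shows "j' = j"
proof (cases j' j rule: linorder_cases)
  case less
  then have "\<Lambda> * (int j')^2 \<le> \<Lambda> * (int j - 1)^2" by (intro Lam_sq_mono) auto
  then show ?thesis using assms unfolding in_window_def by linarith
next
  case greater
  then have "\<Lambda> * (int j + 1)^2 \<le> \<Lambda> * (int j')^2" by (intro Lam_sq_mono) auto
  then show ?thesis using assms unfolding in_window_def by linarith
qed

definition P :: "int \<Rightarrow> 'a" where "P t = (g^^nat (t mod int k)) p"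

lemma P_in: "P t \<in> Y" unfolding P_def using funpow_in[OF p_in] by simp

lemma P_far: "D \<le> dist a0 (P t)" unfolding P_def by (rule a0_far)

lemma P_at_multiple: "int k dvd t \<Longrightarrow> P t = p" unfolding P_def by simp

lemma P_periodic: "int k dvd h \<Longrightarrow> P (t + h) = P t"
  unfolding P_def by (simp add: mod_add_right_eq[symmetric])

lemma P_full_orbit: "full_orbit Y g P"
  unfolding full_orbit_def
proof (intro allI conjI)
  fix t
  show "P t \<in> Y" by (rule P_in)
  have "g ((g^^i) p) = (g^^Suc i) p" for i by simp
  then show "g (P t) = P (t + 1)" unfolding P_def
    using periodic_extension_chain[of k "\<lambda>i. (g^^i) p" "\<lambda>x y. g x = y" t] k_pos p_periodic
    by simp
qed

lemma excursion_exists: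
  "\<exists>e. e 0 = p \<and> e N = a0 \<and> e win_len = p \<and> chain \<delta> win_len e"
proof -
  obtain c1 where c1: "c1 0 = p" "c1 N = a0" "chain \<delta> N c1"
    using chain_exists[OF p_in a0_in] by blast
  have "N \<le> win_len - N" using win_len_ge by simp
  then obtain c2 where c2: "c2 0 = a0" "c2 (win_len - N) = p" "chain \<delta> (win_len - N) c2"
    using chain_exists[OF a0_in p_in] by blast
  define e where "e i = (if i \<le> N then c1 i else c2 (i - N))" for i
  have "dist (g (e i)) (e (Suc i)) < \<delta>" if "i < win_len" for i
  proof (cases "i < N")
    case True then show ?thesis using c1(3) unfolding e_def chain_def by simp
  next
    case False
    then have "e i = c2 (i - N)" "e (Suc i) = c2 (Suc (i - N))" "i - N < win_len - N"
      using that c1(2) c2(1) unfolding e_def by (auto simp: Suc_diff_le)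
    then show ?thesis using c2(3) unfolding chain_def by simp
  qed
  moreover have "e 0 = p" "e N = a0" "e win_len = p" "\<forall>i. e i \<in> Y"
    using c1 c2 win_len_ge N_ge unfolding e_def chain_def by auto
  ultimately show ?thesis unfolding chain_def by blast
qed

definition excursion :: "nat \<Rightarrow> 'a" where
  "excursion = (SOME e. e 0 = p \<and> e N = a0 \<and> e win_len = p \<and> chain \<delta> win_len e)"

lemma excursion: "excursion 0 = p" "excursion N = a0" "excursion win_len = p"
  "excursion i \<in> Y" "i < win_len \<Longrightarrow> dist (g (excursion i)) (excursion (Suc i)) < \<delta>"
proof -
  have "excursion 0 = p \<and> excursion N = a0 \<and> excursion win_len = p \<and> chain \<delta> win_len excursion"
    unfolding excursion_def by (rule someI_ex[OF excursion_exists])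
  then show "excursion 0 = p" "excursion N = a0" "excursion win_len = p"
    "excursion i \<in> Y" "i < win_len \<Longrightarrow> dist (g (excursion i)) (excursion (Suc i)) < \<delta>"
    unfolding chain_def by auto
qed

end

context excursion_construction
begin

text \<open>Window \<open>j\<close> is used by the code \<open>\<omega>\<close> (after a prefix of length \<open>L\<close>) iff it starts after the
  prefix and \<open>\<omega>\<close> holds at the first component of \<open>j\<close>; every code entry thus controls
  infinitely many windows.\<close>
definition active :: "nat \<Rightarrow> (nat \<Rightarrow> bool) \<Rightarrow> nat \<Rightarrow> bool" where
  "active L \<omega> j \<longleftrightarrow> int L + int N < \<Lambda> * (int j)^2 \<and> \<omega> (fst (prod_decode j))"

lemma active_late: "active L \<omega> j \<Longrightarrow> int L + int N < \<Lambda> * (int j)^2"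
  unfolding active_def by blast

lemma active_pos: "active L \<omega> j \<Longrightarrow> j \<ge> 1"
  using active_late[of L \<omega> j] by (cases j) auto

definition admissible :: "(int \<Rightarrow> 'a) \<Rightarrow> nat \<Rightarrow> (nat \<Rightarrow> 'a) \<Rightarrow> bool" where
  "admissible Q L cf \<longleftrightarrow> full_orbit Y g Q \<and> cf 0 = Q (int L) \<and> cf N = P (int L + int N) \<and>
     chain \<delta> N cf"

definition pseudo :: "(int \<Rightarrow> 'a) \<Rightarrow> nat \<Rightarrow> (nat \<Rightarrow> 'a) \<Rightarrow> (nat \<Rightarrow> bool) \<Rightarrow> int \<Rightarrow> 'a" where
  "pseudo Q L cf \<omega> t = (if t \<le> int L then Q t
     else if t \<le> int L + int N then cf (nat (t - int L))
     else if (\<exists>j. active L \<omega> j \<and> in_window j t)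
       then excursion (nat (t - \<Lambda> * (int (SOME j. active L \<omega> j \<and> in_window j t))^2))
     else P t)"

lemma pseudo_prefix: "t \<le> int L \<Longrightarrow> pseudo Q L cf \<omega> t = Q t"
  unfolding pseudo_def by simp

lemma pseudo_bridge:
  "admissible Q L cf \<Longrightarrow> int L \<le> t \<Longrightarrow> t \<le> int L + int N \<Longrightarrow> pseudo Q L cf \<omega> t = cf (nat (t - int L))"
  unfolding pseudo_def admissible_def by auto

lemma pseudo_window:
  assumes "active L \<omega> j" "in_window j t"
  shows "pseudo Q L cf \<omega> t = excursion (nat (t - \<Lambda> * (int j)^2))"
proof -
  have "(SOME j. active L \<omega> j \<and> in_window j t) = j"
    using assms windows_disjoint by (intro some_equality) auto
  moreover have "t > int L + int N" using assms active_late unfolding in_window_def by fastforce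
  ultimately show ?thesis unfolding pseudo_def using assms by auto
qed

lemma pseudo_periodic:
  "t > int L + int N \<Longrightarrow> \<not> (\<exists>j. active L \<omega> j \<and> in_window j t) \<Longrightarrow> pseudo Q L cf \<omega> t = P t"
  unfolding pseudo_def by auto

lemma pseudo_in: "admissible Q L cf \<Longrightarrow> pseudo Q L cf \<omega> t \<in> Y"
  unfolding pseudo_def admissible_def chain_def using full_orbit_in excursion(4) P_in by auto

text \<open>After the bridge, the pseudo-orbit is back on the periodic orbit at time \<open>t + 1\<close> whenever
  time \<open>t\<close> is not inside an active window (a window starting at \<open>t + 1\<close> starts at \<open>p\<close>).\<close>
lemma pseudo_back_on_P:
  assumes "t \<ge> int L + int N" and "\<not> (\<exists>j. active L \<omega> j \<and> in_window j t)"
  shows "pseudo Q L cf \<omega> (t + 1) = P (t + 1)"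
proof (cases "\<exists>j. active L \<omega> j \<and> in_window j (t + 1)")
  case True
  then obtain j where j: "active L \<omega> j" "in_window j (t + 1)" by blast
  then have "t + 1 = \<Lambda> * (int j)^2" using assms(2) unfolding in_window_def by force
  then show ?thesis
    using pseudo_window[OF j] excursion(1) P_at_multiple[OF k_dvd_window_start[of j]] by simp
next
  case False
  then show ?thesis using assms(1) by (intro pseudo_periodic) auto
qed

text \<open>Inside an active window the pseudo-orbit follows the excursion chain, which ends at \<open>p\<close>
  exactly when the window is left.\<close>
lemma pseudo_step_in_window:
  assumes j: "active L \<omega> j" "in_window j t"
  shows "dist (g (pseudo Q L cf \<omega> t)) (pseudo Q L cf \<omega> (t + 1)) < \<delta>"
proof -
  define i where "i = nat (t - \<Lambda> * (int j)^2)"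
  have yt: "pseudo Q L cf \<omega> t = excursion i" using pseudo_window[OF j] unfolding i_def .
  have i_less: "i < win_len" using j(2) unfolding in_window_def i_def \<Lambda>_def by linarith
  have "pseudo Q L cf \<omega> (t + 1) = excursion (Suc i)"
  proof (cases "in_window j (t + 1)")
    case True
    have "nat (t + 1 - \<Lambda> * (int j)^2) = Suc i" using j(2) unfolding i_def in_window_def
      by (subst Suc_nat_eq_nat_zadd1) (auto simp: algebra_simps)
    then show ?thesis using pseudo_window[OF j(1) True] by simp
  next
    case False
    then have t1: "t + 1 = \<Lambda> * (int j)^2 + \<Lambda>" using j(2) unfolding in_window_def by linarith
    then have "Suc i = win_len" unfolding i_def using Lam_pos \<Lambda>_def by simp
    moreover have "\<not> (\<exists>j'. active L \<omega> j' \<and> in_window j' (t + 1))"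
      using after_window[OF active_pos[OF j(1)]] t1 by metis
    then have "pseudo Q L cf \<omega> (t + 1) = P (t + 1)"
      using pseudo_periodic[of L "t + 1"] active_late[OF j(1)] j(2) unfolding in_window_def by simp
    moreover have "P (t + 1) = p"
      using t1 k_dvd_window_start[of j] by (intro P_at_multiple) (simp add: \<Lambda>_def win_len_def)
    ultimately show ?thesis using excursion(3) by simp
  qed
  then show ?thesis using yt excursion(5)[OF i_less] by simp
qed

lemma pseudo_step:
  assumes V: "admissible Q L cf"
  shows "dist (g (pseudo Q L cf \<omega> t)) (pseudo Q L cf \<omega> (t + 1)) < \<delta>"
proof -
  have QO: "full_orbit Y g Q" and cf_step: "\<And>i. i < N \<Longrightarrow> dist (g (cf i)) (cf (Suc i)) < \<delta>"
    and cfN: "cf N = P (int L + int N)" using V unfolding admissible_def chain_def by auto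
  have PO: "g (P s) = P (s + 1)" for s using P_full_orbit unfolding full_orbit_def by blast
  consider "t < int L" | "int L \<le> t \<and> t < int L + int N" | "t = int L + int N"
    | "t > int L + int N \<and> (\<exists>j. active L \<omega> j \<and> in_window j t)"
    | "t > int L + int N \<and> \<not> (\<exists>j. active L \<omega> j \<and> in_window j t)"
    by (metis linorder_neqE_linordered_idom not_le)
  then show ?thesis
  proof cases
    case 1
    then have "pseudo Q L cf \<omega> t = Q t" "pseudo Q L cf \<omega> (t + 1) = Q (t + 1)"
      using pseudo_prefix by auto
    then show ?thesis using QO delta_pos unfolding full_orbit_def by simp
  next
    case 2
    then have "pseudo Q L cf \<omega> t = cf (nat (t - int L))"
      "pseudo Q L cf \<omega> (t + 1) = cf (Suc (nat (t - int L)))"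
      using pseudo_bridge[OF V] by (auto simp: nat_add_distrib[symmetric] intro!: arg_cong[where f=cf])
    moreover have "nat (t - int L) < N" using 2 by (subst nat_less_iff) auto
    ultimately show ?thesis using cf_step by simp
  next
    case 3
    then have "pseudo Q L cf \<omega> t = P t" using pseudo_bridge[OF V, of t] cfN by simp
    moreover have "\<not> (\<exists>j. active L \<omega> j \<and> in_window j t)"
      using 3 active_late unfolding in_window_def by fastforce
    then have "pseudo Q L cf \<omega> (t + 1) = P (t + 1)" using pseudo_back_on_P 3 by simp
    ultimately show ?thesis using PO delta_pos by simp
  next
    case 4
    then show ?thesis using pseudo_step_in_window by blast
  next
    case 5
    then have "pseudo Q L cf \<omega> t = P t" using pseudo_periodic by simp
    moreover have "pseudo Q L cf \<omega> (t + 1) = P (t + 1)" using pseudo_back_on_P 5 by simp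
    ultimately show ?thesis using PO delta_pos by simp
  qed
qed

definition shadow :: "(int \<Rightarrow> 'a) \<Rightarrow> nat \<Rightarrow> (nat \<Rightarrow> 'a) \<Rightarrow> (nat \<Rightarrow> bool) \<Rightarrow> int \<Rightarrow> 'a" where
  "shadow Q L cf \<omega> = (SOME X. full_orbit Y g X \<and> (\<forall>t. dist (X t) (pseudo Q L cf \<omega> t) \<le> \<gamma>))"

lemma shadow:
  assumes "admissible Q L cf"
  shows "full_orbit Y g (shadow Q L cf \<omega>)" "dist (shadow Q L cf \<omega> t) (pseudo Q L cf \<omega> t) \<le> \<gamma>"
proof -
  have "\<exists>X. full_orbit Y g X \<and> (\<forall>t. dist (X t) (pseudo Q L cf \<omega> t) \<le> \<gamma>)"
    using shadows pseudo_in[OF assms] pseudo_step[OF assms] by blast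
  from someI_ex[OF this]
  show "full_orbit Y g (shadow Q L cf \<omega>)" "dist (shadow Q L cf \<omega> t) (pseudo Q L cf \<omega> t) \<le> \<gamma>"
    unfolding shadow_def by auto
qed

lemma shadow_near_a0:
  assumes "admissible Q L cf" "active L \<omega> j"
  shows "dist (shadow Q L cf \<omega> (\<Lambda> * (int j)^2 + int N)) a0 \<le> \<gamma>"
proof -
  have "in_window j (\<Lambda> * (int j)^2 + int N)" using N_less_Lam unfolding in_window_def by simp
  then have "pseudo Q L cf \<omega> (\<Lambda> * (int j)^2 + int N) = a0"
    using pseudo_window[OF assms(2)] excursion(2) by simp
  then show ?thesis using shadow(2)[OF assms(1)] by metis
qed

lemma shadow_near_P:
  assumes "admissible Q L cf" "t > int L + int N" "\<not> (\<exists>j. active L \<omega> j \<and> in_window j t)"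
  shows "dist (shadow Q L cf \<omega> t) (P t) \<le> \<gamma>"
  using shadow(2)[OF assms(1)] pseudo_periodic[OF assms(2,3)] by metis

end

context excursion_construction
begin

definition sep :: real where "sep = D / (4 * (real N + 1))"

lemma sep_pos: "sep > 0" unfolding sep_def using D_pos by simp

lemma sep_less: "sep < D/2"
proof -
  have "D / (4 * (real N + 1)) \<le> D / 4" using D_pos by (intro divide_left_mono) auto
  then show ?thesis unfolding sep_def using D_pos by linarith
qed

lemma far_apart:
  assumes "dist x a0 \<le> \<gamma>" "dist y (P s) \<le> \<gamma>"
  shows "dist x y \<ge> D/2"
proof -
  have "D \<le> dist a0 (P s)" by (rule P_far)
  also have "\<dots> \<le> dist a0 x + dist x (P s)" by (rule dist_triangle)
  also have "dist x (P s) \<le> dist x y + dist y (P s)" by (rule dist_triangle)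
  finally show ?thesis using assms gamma_D by (simp add: dist_commute)
qed

text \<open>Codes that differ somewhere give orbits that are \<open>sep\<close>-apart at arbitrarily late times,
  even after a time shift \<open>h\<close>: in a window used by one code but not the other, one orbit
  visits \<open>a0\<close> while the other stays near the periodic orbit.\<close>
lemma separation_distinct_codes:
  assumes V: "admissible Q L cf" and V': "admissible Q' L' cf'" and w: "\<omega> i0" "\<not> \<omega>' i0"
  shows "\<exists>t\<ge>M. dist (shadow Q L cf \<omega> t) (shadow Q' L' cf' \<omega>' (t + h)) > sep"
proof -
  define j where "j = prod_encode (i0, nat M + nat \<bar>h\<bar> + L + L' + N + 2)"
  define J where "J = int j"
  have "j \<ge> nat M + nat \<bar>h\<bar> + L + L' + N + 2" unfolding j_def by (rule le_prod_encode_2)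
  then have J: "J \<ge> M" "J \<ge> \<bar>h\<bar> + int L + int L' + int N + 2" "J \<ge> 0" unfolding J_def by auto
  note sq = Lam_square_facts[OF J(3)]
  have decode: "fst (prod_decode j) = i0" unfolding j_def by simp
  have act: "active L \<omega> j" unfolding active_def decode J_def[symmetric] using w(1) sq(1) J(2) by auto
  have nact: "\<not> active L' \<omega>' j" unfolding active_def decode using w(2) by auto
  define t where "t = \<Lambda> * J^2 + int N"
  have near_a0: "dist (shadow Q L cf \<omega> t) a0 \<le> \<gamma>" using shadow_near_a0[OF V act] unfolding t_def J_def .
  have region: "\<Lambda> * (J - 1)^2 + \<Lambda> \<le> t + h" "t + h < \<Lambda> * (J + 1)^2"
    unfolding t_def sq(2) sq(3) using sq(4) sq(5) J(2) Lam_pos by linarith+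
  have "\<not> (\<exists>j'. active L' \<omega>' j' \<and> in_window j' (t + h))"
    using only_window_near[of j "t + h"] region nact unfolding J_def by auto
  moreover have "t + h > int L' + int N" unfolding t_def using sq(1) J(2) by linarith
  ultimately have "dist (shadow Q' L' cf' \<omega>' (t + h)) (P (t + h)) \<le> \<gamma>"
    using shadow_near_P[OF V'] by blast
  with near_a0 have "dist (shadow Q L cf \<omega> t) (shadow Q' L' cf' \<omega>' (t + h)) \<ge> D/2"
    by (rule far_apart)
  moreover have "t \<ge> M" unfolding t_def using sq(1) J(1) by linarith
  ultimately show ?thesis using sep_less by force
qed

text \<open>The orbit of a code using its \<open>0\<close>-th entry is not asymptotic to any nontrivial time shift
  of itself: the visit to \<open>a0\<close> in a late window, compared with a point near the periodic orbit
  \<open>(N+1)h\<close> steps earlier, forces a jump of size \<open>sep\<close> along the progression of step \<open>h\<close>.\<close>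
lemma separation_shift_pos:
  assumes V: "admissible Q L cf" and w: "\<omega> 0" and h: "h > 0"
  shows "\<exists>t\<ge>M. dist (shadow Q L cf \<omega> t) (shadow Q L cf \<omega> (t + h)) > sep"
proof -
  let ?X = "shadow Q L cf \<omega>"
  define j where "j = prod_encode (0, nat M + nat h * (N+1) + L + N + 2)"
  define J where "J = int j"
  have "int (nat h * (N+1)) = (int N + 1) * h" using h by (simp add: algebra_simps)
  moreover have "j \<ge> nat M + nat h * (N+1) + L + N + 2" unfolding j_def by (rule le_prod_encode_2)
  ultimately have J: "J \<ge> int (nat M) + (int N + 1) * h + int L + int N + 2" "J \<ge> 0"
    unfolding J_def by linarith+
  have M: "int (nat M) \<ge> M" "int (nat M) \<ge> 0" by simp_all
  note sq = Lam_square_facts[OF J(2)]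
  have hN: "(int N + 1) * h \<ge> int N + 1" using h by (simp add: mult_le_cancel_left1)
  have decode: "fst (prod_decode j) = 0" unfolding j_def by simp
  have "int L + int N < \<Lambda> * J^2" using sq(1) J(1) hN M by linarith
  then have act: "active L \<omega> j" unfolding active_def decode J_def[symmetric] using w by auto
  define e where "e = \<Lambda> * J^2 + int N"
  define t0 where "t0 = e - (int N + 1) * h"
  have near_a0: "dist (?X e) a0 \<le> \<gamma>" using shadow_near_a0[OF V act] unfolding e_def J_def .
  have region: "\<Lambda> * (J - 1)^2 + \<Lambda> \<le> t0" "t0 < \<Lambda> * (J + 1)^2" "t0 < \<Lambda> * J^2"
    unfolding t0_def e_def sq(2) sq(3) using sq(4) sq(5) J(1) Lam_pos hN M by linarith+
  have "\<not> (\<exists>j'. active L \<omega> j' \<and> in_window j' t0)"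
    using only_window_near[of j t0] region unfolding J_def in_window_def by fastforce
  moreover have "t0 > int L + int N" unfolding t0_def e_def using sq(1) J(1) M by linarith
  ultimately have "dist (?X t0) (P t0) \<le> \<gamma>" using shadow_near_P[OF V] by blast
  with near_a0 have "dist (?X e) (?X t0) \<ge> D/2" by (rule far_apart)
  moreover have "real (N+1) * sep = D/4" unfolding sep_def by (simp add: field_simps)
  moreover have "e = t0 + int (N+1) * h" unfolding t0_def by (simp add: algebra_simps)
  ultimately have "dist (?X t0) (?X (t0 + int (N+1) * h)) > real (N+1) * sep"
    using D_pos by (simp add: dist_commute)
  then obtain q where q: "dist (?X (t0 + int q * h)) (?X (t0 + int q * h + h)) > sep"
    using long_step_on_progression by blast
  have "t0 \<ge> M" unfolding t0_def e_def using sq(1) J(1) M by linarith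
  moreover have "int q * h \<ge> 0" using h by simp
  ultimately show ?thesis using q by (intro exI[of _ "t0 + int q * h"]) auto
qed

lemma separation_shift:
  assumes V: "admissible Q L cf" and w: "\<omega> 0" and h: "h \<noteq> 0"
  shows "\<exists>t\<ge>M. dist (shadow Q L cf \<omega> t) (shadow Q L cf \<omega> (t + h)) > sep"
proof (cases "h > 0")
  case True then show ?thesis using separation_shift_pos[of Q L cf \<omega>, OF V w] by blast
next
  case False
  then have "-h > 0" using h by simp
  from separation_shift_pos[of Q L cf \<omega>, OF V w this, of "M + h"] obtain t' where
    "t' \<ge> M + h" "dist (shadow Q L cf \<omega> t') (shadow Q L cf \<omega> (t' + - h)) > sep" by blast
  then show ?thesis by (intro exI[of _ "t' - h"]) (auto simp: dist_commute)
qed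

end

context excursion_construction
begin

lemma shadow_close_P:
  assumes V: "admissible Q L cf" and W: "expansive_window L0 \<eta>"
    and quiet: "\<And>s. \<bar>s - t\<bar> \<le> int L0 \<Longrightarrow> s > int L + int N \<and> \<not> (\<exists>j. in_window j s)"
  shows "dist (shadow Q L cf \<omega> t) (P t) < \<eta>"
proof (rule expansive_window_close[OF shadow(1)[OF V] P_full_orbit W])
  fix s assume "\<bar>s - t\<bar> \<le> int L0"
  then have "dist (shadow Q L cf \<omega> s) (P s) \<le> \<gamma>" using quiet by (intro shadow_near_P[OF V]) auto
  then show "dist (shadow Q L cf \<omega> s) (P s) \<le> \<beta>" using gamma_beta gamma_pos by linarith
qed

lemma shadow_close_prefix:
  assumes V: "admissible Q L cf" and W: "expansive_window L \<eta>"
  shows "dist (shadow Q L cf \<omega> 0) (Q 0) < \<eta>"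
proof (rule expansive_window_close[OF shadow(1)[OF V] _ W])
  show "full_orbit Y g Q" using V unfolding admissible_def by blast
  fix s :: int assume "\<bar>s - 0\<bar> \<le> int L"
  then have "pseudo Q L cf \<omega> s = Q s" by (intro pseudo_prefix) auto
  then have "dist (shadow Q L cf \<omega> s) (Q s) \<le> \<gamma>" using shadow(2)[OF V] by metis
  then show "dist (shadow Q L cf \<omega> s) (Q s) \<le> \<beta>" using gamma_beta gamma_pos by linarith
qed

lemma pseudo_agree:
  assumes agree: "\<And>i. i < K \<Longrightarrow> \<omega> i = \<omega>' i" and s: "s < \<Lambda> * (int K)^2"
  shows "pseudo Q L cf \<omega> s = pseudo Q L cf \<omega>' s"
proof -
  have "active L \<omega> j \<longleftrightarrow> active L \<omega>' j" if "in_window j s" for j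
  proof -
    have "j < K"
    proof (rule ccontr)
      assume "\<not> j < K"
      then have "\<Lambda> * (int K)^2 \<le> \<Lambda> * (int j)^2" by (intro Lam_sq_mono) auto
      then show False using that s unfolding in_window_def by linarith
    qed
    moreover have "fst (prod_decode j) \<le> j"
      by (metis le_prod_encode_1 prod_decode_inverse prod.collapse)
    ultimately show ?thesis unfolding active_def using agree by simp
  qed
  then have eq: "(\<lambda>j. active L \<omega> j \<and> in_window j s) = (\<lambda>j. active L \<omega>' j \<and> in_window j s)"
    by blast
  show ?thesis unfolding pseudo_def eq ..
qed

lemma shadow_continuous_in_code:
  assumes V: "admissible Q L cf" and eta: "\<eta> > 0"
  shows "\<exists>K. \<forall>\<omega> \<omega>'. (\<forall>i<K. \<omega> i = \<omega>' i) \<longrightarrow> dist (shadow Q L cf \<omega> 0) (shadow Q L cf \<omega>' 0) < \<eta>"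
proof -
  obtain L0 where W: "expansive_window L0 \<eta>" using uniform_expansivity[OF eta] by blast
  have "dist (shadow Q L cf \<omega> 0) (shadow Q L cf \<omega>' 0) < \<eta>"
    if agree: "\<forall>i<L0 + 1. \<omega> i = \<omega>' i" for \<omega> \<omega>'
  proof (rule expansive_window_close[OF shadow(1)[OF V] shadow(1)[OF V] W])
    fix s :: int assume "\<bar>s - 0\<bar> \<le> int L0"
    moreover have "int (L0 + 1) \<le> \<Lambda> * (int (L0 + 1))^2" using Lam_square_facts(1) by simp
    ultimately have "pseudo Q L cf \<omega> s = pseudo Q L cf \<omega>' s"
      using agree by (intro pseudo_agree[of "L0 + 1"]) auto
    then have "dist (shadow Q L cf \<omega> s) (shadow Q L cf \<omega>' s) \<le> \<gamma> + \<gamma>"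
      using dist_triangle2[of "shadow Q L cf \<omega> s" "shadow Q L cf \<omega>' s" "pseudo Q L cf \<omega> s"]
        shadow(2)[OF V, of \<omega> s] shadow(2)[OF V, of \<omega>' s] by simp
    then show "dist (shadow Q L cf \<omega> s) (shadow Q L cf \<omega>' s) \<le> \<beta>" using gamma_beta by linarith
  qed
  then show ?thesis by blast
qed

definition quiet :: "int \<Rightarrow> int \<Rightarrow> bool" where
  "quiet c t \<longleftrightarrow> (\<forall>s. \<bar>s - t\<bar> \<le> c \<longrightarrow> \<not> (\<exists>j. in_window j s))"

text \<open>Since late windows are far apart, of two late times at distance \<open>\<Lambda> + 2c + 1\<close> at least
  one is \<open>c\<close>-quiet.\<close>
lemma quiet_time:
  assumes c: "c \<ge> 0" and l: "l = \<Lambda> + 2*c" and t: "t > \<Lambda> * l^2 + l"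
  shows "quiet c t \<or> quiet c (t + l + 1)"
proof (rule ccontr)
  assume "\<not> ?thesis"
  then obtain s s' j j' where "\<bar>s - t\<bar> \<le> c" "in_window j s" "\<bar>s' - (t + l + 1)\<bar> \<le> c" "in_window j' s'"
    unfolding quiet_def by blast
  then have b: "\<Lambda> * (int j)^2 - c \<le> t" "t \<le> \<Lambda> * (int j)^2 + \<Lambda> + c"
    "\<Lambda> * (int j')^2 - c \<le> t + l + 1" "t + l + 1 \<le> \<Lambda> * (int j')^2 + \<Lambda> + c"
    unfolding in_window_def by (auto simp: abs_le_iff)
  show False
  proof (cases j j' rule: linorder_cases)
    case equal then show ?thesis using b l by simp
  next
    case greater
    have "0 \<le> int j' * \<Lambda>" using Lam_pos by simp
    then show False using window_gap[OF greater] b l Lam_pos by linarith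
  next
    case less
    have "int j \<le> int j * \<Lambda>" using Lam_square_facts(4)[of "int j"] by simp
    then have "int j \<le> l" using window_gap[OF less] b l c Lam_pos by linarith
    then have "\<Lambda> * (int j)^2 \<le> \<Lambda> * l^2" by (intro Lam_sq_mono) auto
    then show False using b t l c by linarith
  qed
qed

text \<open>If the neighbourhoods of \<open>t\<close> and \<open>t + h\<close> are free of windows and after the prefixes, two
  coded orbits compared with a time shift \<open>h\<close> divisible by \<open>k\<close> are close at \<open>t\<close>: both are close
  to the same point of the periodic orbit.\<close>
lemma shadows_close_when_quiet:
  assumes V: "admissible Q L cf" and V': "admissible Q' L' cf'" and h: "int k dvd h"
    and W: "expansive_window L0 (\<eta>/2)" and q: "quiet (int L0 + \<bar>h\<bar>) t"
    and late: "t > int L0 + \<bar>h\<bar> + int L + int L' + int N"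
  shows "dist (shadow Q L cf \<omega> t) (shadow Q' L' cf' \<omega>' (t + h)) < \<eta>"
proof -
  have free: "\<not> (\<exists>j. in_window j s)" if "\<bar>s - t\<bar> \<le> int L0 + \<bar>h\<bar>" for s
    using q that unfolding quiet_def by blast
  have "dist (shadow Q L cf \<omega> t) (P t) < \<eta>/2"
  proof (rule shadow_close_P[OF V W])
    fix s assume s: "\<bar>s - t\<bar> \<le> int L0"
    then have "\<bar>s - t\<bar> \<le> int L0 + \<bar>h\<bar>" using abs_ge_zero[of h] by linarith
    then show "s > int L + int N \<and> \<not> (\<exists>j. in_window j s)"
      using free[of s] late s by (auto simp: abs_le_iff)
  qed
  moreover have "dist (shadow Q' L' cf' \<omega>' (t + h)) (P (t + h)) < \<eta>/2"
  proof (rule shadow_close_P[OF V' W])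
    fix s assume s: "\<bar>s - (t + h)\<bar> \<le> int L0"
    have "\<bar>s - t\<bar> \<le> \<bar>s - (t + h)\<bar> + \<bar>h\<bar>" using abs_triangle_ineq[of "s - (t + h)" h] by simp
    then have "\<bar>s - t\<bar> \<le> int L0 + \<bar>h\<bar>" using s by linarith
    then show "s > int L' + int N \<and> \<not> (\<exists>j. in_window j s)"
      using free[of s] late by (auto simp: abs_le_iff)
  qed
  moreover have "P (t + h) = P t" using P_periodic[OF h] .
  ultimately show ?thesis
    using dist_triangle2[of "shadow Q L cf \<omega> t" "shadow Q' L' cf' \<omega>' (t + h)" "P t"] by simp
qed

lemma shadows_syndetically_close:
  assumes V: "admissible Q L cf" and V': "admissible Q' L' cf'" and h: "int k dvd h" and eta: "\<eta> > 0"
  shows "\<exists>B M0. B \<ge> 0 \<and> (\<forall>t\<ge>M0. dist (shadow Q L cf \<omega> t) (shadow Q' L' cf' \<omega>' (t + h)) < \<eta> \<or>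
            dist (shadow Q L cf \<omega> (t + B)) (shadow Q' L' cf' \<omega>' (t + B + h)) < \<eta>)"
proof -
  obtain L0 where W: "expansive_window L0 (\<eta>/2)" using uniform_expansivity eta by fastforce
  define c where "c = int L0 + \<bar>h\<bar>"
  define l where "l = \<Lambda> + 2*c"
  define M0 where "M0 = \<Lambda> * l^2 + l + 1 + c + int L + int L' + int N"
  have c: "c \<ge> 0" unfolding c_def by simp
  have l: "l \<ge> 0" unfolding l_def using Lam_pos c by simp
  have "\<Lambda> * l^2 \<ge> 0" using Lam_pos by simp
  then have close: "dist (shadow Q L cf \<omega> s) (shadow Q' L' cf' \<omega>' (s + h)) < \<eta>"
    if "quiet c s" "s \<ge> M0" for s
    using that l shadows_close_when_quiet[OF V V' h W] unfolding c_def M0_def by auto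
  have "dist (shadow Q L cf \<omega> t) (shadow Q' L' cf' \<omega>' (t + h)) < \<eta> \<or>
      dist (shadow Q L cf \<omega> (t + (l + 1))) (shadow Q' L' cf' \<omega>' (t + (l + 1) + h)) < \<eta>"
    if "t \<ge> M0" for t
  proof -
    have "quiet c t \<or> quiet c (t + l + 1)"
      using that c \<open>\<Lambda> * l^2 \<ge> 0\<close> by (intro quiet_time[OF c l_def]) (simp add: M0_def)
    then show ?thesis using close[of t] close[of "t + (l + 1)"] that l by (auto simp: add.assoc)
  qed
  then show ?thesis using l by (intro exI[of _ "l + 1"] exI[of _ M0]) simp
qed

end

locale coded_family = excursion_construction +
  fixes centre :: "nat \<Rightarrow> 'a" and pre_len :: "nat \<Rightarrow> nat" and pre_orb :: "nat \<Rightarrow> int \<Rightarrow> 'a"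
    and bridge :: "nat \<Rightarrow> nat \<Rightarrow> 'a"
  assumes centre_in: "centre i \<in> Y"
    and centre_dense: "\<And>y e. y \<in> Y \<Longrightarrow> e > 0 \<Longrightarrow> \<exists>i. dist y (centre i) < e"
    and pre_len: "expansive_window (pre_len l) (1 / (real l + 1))"
    and pre_orb_0: "pre_orb l 0 = centre (fst (prod_decode l))"
    and admissible_pre: "admissible (pre_orb l) (pre_len l) (bridge l)"
begin

definition coded_orbit :: "nat \<Rightarrow> (nat \<Rightarrow> bool) \<Rightarrow> int \<Rightarrow> 'a" where
  "coded_orbit l s = shadow (pre_orb l) (pre_len l) (bridge l) (code l s)"

text \<open>The \<open>m\<close>-th Cantor set of index \<open>l\<close> consists of the points \<open>cantor_point l m s\<close>;
  \<open>g\<^sup>k\<close> maps the \<open>m\<close>-th to the \<open>(m+1)\<close>-th.\<close>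
definition cantor_point :: "nat \<Rightarrow> nat \<Rightarrow> (nat \<Rightarrow> bool) \<Rightarrow> 'a" where
  "cantor_point l m s = coded_orbit l s (int (k * m))"

lemma coded_orbit_full: "full_orbit Y g (coded_orbit l s)"
  unfolding coded_orbit_def by (rule shadow(1)[OF admissible_pre])

lemma cantor_point_in: "cantor_point l m s \<in> Y"
  unfolding cantor_point_def by (rule full_orbit_in[OF coded_orbit_full])

lemma cantor_point_iterate: "(g^^n) (cantor_point l m s) = coded_orbit l s (int n + int (k * m))"
  unfolding cantor_point_def using full_orbit_shift[OF coded_orbit_full, of l s "int (k*m)" n]
  by (simp add: add.commute)

lemma cantor_point_step: "(g^^k) (cantor_point l m s) = cantor_point l (Suc m) s"
  using cantor_point_iterate[of k l m s] unfolding cantor_point_def by (simp add: algebra_simps)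

lemma cantor_points_separated:
  assumes ne: "(l1, s1, m1) \<noteq> (l2, s2, m2)"
  shows "\<exists>n\<ge>M. dist ((g^^n) (cantor_point l1 m1 s1)) ((g^^n) (cantor_point l2 m2 s2)) > sep"
proof -
  define h where "h = int (k*m2) - int (k*m1)"
  define M1 where "M1 = int M + int (k*m1)"
  have "\<exists>t\<ge>M1. dist (coded_orbit l1 s1 t) (coded_orbit l2 s2 (t + h)) > sep"
  proof (cases "code l1 s1 = code l2 s2")
    case True
    then have "l1 = l2" "s1 = s2" using code_inj by auto
    then have "h \<noteq> 0" using ne k_pos unfolding h_def by auto
    then show ?thesis unfolding coded_orbit_def \<open>l1 = l2\<close> \<open>s1 = s2\<close>
      by (rule separation_shift[of "pre_orb l2" "pre_len l2" "bridge l2" "code l2 s2",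
            OF admissible_pre code_0])
  next
    case False
    then obtain i0 where i0: "code l1 s1 i0 \<noteq> code l2 s2 i0" by blast
    show ?thesis
    proof (cases "code l1 s1 i0")
      case True
      then show ?thesis using i0 unfolding coded_orbit_def
        by (intro separation_distinct_codes[OF admissible_pre admissible_pre]) auto
    next
      case False
      then obtain t where t: "t \<ge> M1 + h" "dist (coded_orbit l2 s2 t) (coded_orbit l1 s1 (t + - h)) > sep"
        using i0 separation_distinct_codes[where Q = "pre_orb l2" and L = "pre_len l2"
            and cf = "bridge l2" and Q' = "pre_orb l1" and L' = "pre_len l1" and cf' = "bridge l1"
            and \<omega> = "code l2 s2" and \<omega>' = "code l1 s1" and M = "M1 + h" and h = "- h",
            OF admissible_pre admissible_pre]
        unfolding coded_orbit_def by auto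
      then show ?thesis by (intro exI[of _ "t - h"]) (auto simp: dist_commute)
    qed
  qed
  then obtain t where t: "t \<ge> M1" "dist (coded_orbit l1 s1 t) (coded_orbit l2 s2 (t + h)) > sep"
    by blast
  define n where "n = nat (t - int (k*m1))"
  have "int n + int (k*m1) = t" "int n + int (k*m2) = t + h" "n \<ge> M"
    using t(1) unfolding n_def h_def M1_def by auto
  then show ?thesis using t(2) unfolding cantor_point_iterate by metis
qed

lemma cantor_point_inj: "inj (cantor_point l m)"
proof (rule injI)
  fix s s' assume eq: "cantor_point l m s = cantor_point l m s'"
  show "s = s'"
  proof (rule ccontr)
    assume "s \<noteq> s'"
    then obtain n where "dist ((g^^n) (cantor_point l m s)) ((g^^n) (cantor_point l m s')) > sep"
      using cantor_points_separated[of l s m l s' m] by blast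
    then show False using eq sep_pos by simp
  qed
qed

lemma cantor_point_prefix:
  assumes e: "e > 0"
  shows "\<exists>K. \<forall>s'. (\<forall>i<K. s' i = s i) \<longrightarrow> dist (cantor_point l m s') (cantor_point l m s) < e"
proof -
  obtain \<rho> where \<rho>: "\<rho> > 0" "\<And>x x'. x\<in>Y \<Longrightarrow> x'\<in>Y \<Longrightarrow> dist x' x < \<rho> \<Longrightarrow>
      dist ((g^^(k*m)) x') ((g^^(k*m)) x) < e"
    using uniformly_continuous_onE[OF compact_uniformly_continuous[OF continuous_on_funpow compact_Y] e]
    by blast
  obtain K where K: "\<And>\<omega> \<omega>'. \<forall>i<K. \<omega> i = \<omega>' i \<Longrightarrow>
      dist (shadow (pre_orb l) (pre_len l) (bridge l) \<omega> 0) (shadow (pre_orb l) (pre_len l) (bridge l) \<omega>' 0) < \<rho>"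
    using shadow_continuous_in_code[OF admissible_pre \<rho>(1)] by blast
  have "dist (cantor_point l m s') (cantor_point l m s) < e" if "\<forall>i<K. s' i = s i" for s'
  proof -
    have "dist (coded_orbit l s' 0) (coded_orbit l s 0) < \<rho>"
      using K code_prefix[OF that] unfolding coded_orbit_def by blast
    then have "dist ((g^^(k*m)) (coded_orbit l s' 0)) ((g^^(k*m)) (coded_orbit l s 0)) < e"
      using \<rho>(2) full_orbit_in[OF coded_orbit_full] by blast
    then show ?thesis using cantor_point_iterate[of "k*m" l 0] by (simp add: cantor_point_def)
  qed
  then show ?thesis by blast
qed

lemma cantor_set_cantor_points: "cantor_set (range (cantor_point l m))"
  by (rule cantor_set_image[OF cantor_point_inj cantor_point_prefix])

lemma cantor_points_syndetic:
  assumes eta: "\<eta> > 0"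
  shows "syndetic {n. dist ((g^^n) (cantor_point l1 m1 s1)) ((g^^n) (cantor_point l2 m2 s2)) < \<eta>}"
    (is "syndetic ?S")
proof -
  define h where "h = int (k*m2) - int (k*m1)"
  have "int k dvd h" unfolding h_def by simp
  from shadows_syndetically_close[OF admissible_pre admissible_pre this eta]
  obtain B M0 where B: "B \<ge> 0" and BM: "\<And>t. t \<ge> M0 \<Longrightarrow>
      dist (coded_orbit l1 s1 t) (coded_orbit l2 s2 (t + h)) < \<eta> \<or>
      dist (coded_orbit l1 s1 (t + B)) (coded_orbit l2 s2 (t + B + h)) < \<eta>"
    unfolding coded_orbit_def by blast
  have in_S: "n \<in> ?S" if "dist (coded_orbit l1 s1 (int n + int (k*m1))) (coded_orbit l2 s2 (int n + int (k*m1) + h)) < \<eta>"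
    for n
    using that unfolding h_def cantor_point_iterate by simp
  show ?thesis unfolding syndetic_def
  proof (intro allI impI)
    fix A assume "thick A"
    then obtain m0 where m0: "{m0..<m0 + (nat M0 + nat B + 1)} \<subseteq> A" unfolding thick_def by blast
    define n0 where "n0 = m0 + nat M0"
    have "int n0 + int (k*m1) \<ge> M0" unfolding n0_def by linarith
    from BM[OF this] have "n0 \<in> ?S \<or> n0 + nat B \<in> ?S"
      using in_S[of n0] in_S[of "n0 + nat B"] B by (auto simp: algebra_simps)
    moreover have "n0 \<in> A" "n0 + nat B \<in> A" using m0 unfolding n0_def by auto
    ultimately show "?S \<inter> A \<noteq> {}" by blast
  qed
qed

lemma cantor_points_not_asymptotic:
  assumes ne: "(l1, s1, m1) \<noteq> (l2, s2, m2)"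
  shows "\<not> (\<lambda>n. dist ((g^^n) (cantor_point l1 m1 s1)) ((g^^n) (cantor_point l2 m2 s2))) \<longlonglongrightarrow> 0"
proof
  assume "(\<lambda>n. dist ((g^^n) (cantor_point l1 m1 s1)) ((g^^n) (cantor_point l2 m2 s2))) \<longlonglongrightarrow> 0"
  from order_tendstoD(2)[OF this sep_pos] obtain M where
    "\<And>n. n \<ge> M \<Longrightarrow> dist ((g^^n) (cantor_point l1 m1 s1)) ((g^^n) (cantor_point l2 m2 s2)) < sep"
    unfolding eventually_sequentially by blast
  with cantor_points_separated[OF ne, of M] show False by force
qed

lemma cantor_points_limsup:
  assumes ne: "(l1, s1, m1) \<noteq> (l2, s2, m2)"
  shows "limsup (\<lambda>n. ereal (dist ((g^^n) (cantor_point l1 m1 s1)) ((g^^n) (cantor_point l2 m2 s2))))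
           \<ge> ereal sep"
  unfolding limsup_INF_SUP
proof (rule INF_greatest)
  fix M :: nat
  obtain n where n: "n \<ge> M" "dist ((g^^n) (cantor_point l1 m1 s1)) ((g^^n) (cantor_point l2 m2 s2)) > sep"
    using cantor_points_separated[OF ne] by blast
  then have "ereal sep \<le> ereal (dist ((g^^n) (cantor_point l1 m1 s1)) ((g^^n) (cantor_point l2 m2 s2)))"
    by simp
  also have "\<dots> \<le> (SUP m\<in>{M..}. ereal (dist ((g^^m) (cantor_point l1 m1 s1)) ((g^^m) (cantor_point l2 m2 s2))))"
    using n(1) by (intro SUP_upper) auto
  finally show "ereal sep \<le> (SUP m\<in>{M..}. ereal (dist ((g^^m) (cantor_point l1 m1 s1)) ((g^^m) (cantor_point l2 m2 s2))))" .
qed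

definition scrambled_set :: "'a set" where
  "scrambled_set = (\<Union>l. \<Union>m. range (cantor_point l m))"

lemma scrambled_set_subset: "scrambled_set \<subseteq> Y"
  unfolding scrambled_set_def using cantor_point_in by blast

lemma scrambled_set_invariant: "(g^^k) ` scrambled_set \<subseteq> scrambled_set"
  unfolding scrambled_set_def using cantor_point_step by blast

text \<open>Density: the index \<open>l = (i, r)\<close> produces points within \<open>1/(r+1)\<close> of \<open>centre i\<close>.\<close>
lemma scrambled_set_dense: "Y \<subseteq> closure scrambled_set"
proof
  fix y assume y: "y \<in> Y"
  show "y \<in> closure scrambled_set" unfolding closure_approachable
  proof (intro allI impI)
    fix e :: real assume e: "e > 0"
    then obtain i where i: "dist y (centre i) < e/2" using centre_dense[OF y, of "e/2"] by auto
    obtain r :: nat where r: "real r > 2/e" using reals_Archimedean2 by blast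
    define l where "l = prod_encode (i, r)"
    have "r \<le> l" unfolding l_def by (rule le_prod_encode_2)
    then have "1 / (real l + 1) \<le> 1 / (real r + 1)" by (intro divide_left_mono) auto
    also have "\<dots> < e/2" using r e by (simp add: field_simps)
    finally have small: "1 / (real l + 1) < e/2" .
    define x where "x = cantor_point l 0 (\<lambda>_. True)"
    have "dist x (pre_orb l 0) < 1 / (real l + 1)"
      unfolding x_def cantor_point_def coded_orbit_def
      using shadow_close_prefix[OF admissible_pre pre_len] by simp
    moreover have "pre_orb l 0 = centre i" unfolding pre_orb_0 l_def by simp
    ultimately have "dist x y < e" using i small dist_triangle2[of x y "centre i"] by simp
    moreover have "x \<in> scrambled_set" unfolding scrambled_set_def x_def by blast
    ultimately show "\<exists>x\<in>scrambled_set. dist x y < e" by blast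
  qed
qed

lemma scrambled_set_mycielski: "mycielski_set scrambled_set"
  unfolding mycielski_set_def
proof (intro exI conjI)
  show "countable ((\<lambda>(l,m). range (cantor_point l m)) ` UNIV)" by simp
  show "\<forall>C\<in>(\<lambda>(l,m). range (cantor_point l m)) ` UNIV. cantor_set C"
    using cantor_set_cantor_points by auto
  show "scrambled_set = \<Union> ((\<lambda>(l,m). range (cantor_point l m)) ` UNIV)"
    unfolding scrambled_set_def by auto
qed

lemma scrambled_set_scrambled: "synd_scrambled Y g sep scrambled_set"
  unfolding synd_scrambled_def
proof (intro conjI ballI impI allI)
  have "cantor_point 0 0 (\<lambda>_. True) \<noteq> cantor_point 0 0 (\<lambda>_. False)"
    using cantor_point_inj[of 0 0] unfolding inj_def by (metis (full_types))
  then show "\<exists>x\<in>scrambled_set. \<exists>y\<in>scrambled_set. x \<noteq> y" unfolding scrambled_set_def by blast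
next
  fix x y \<eta> assume "x \<in> scrambled_set" "y \<in> scrambled_set" "(\<eta>::real) > 0"
  then show "syndetic {n. dist ((g ^^ n) x) ((g ^^ n) y) < \<eta>}"
    unfolding scrambled_set_def using cantor_points_syndetic by blast
next
  fix x y assume x: "x \<in> scrambled_set" and y: "y \<in> scrambled_set" and ne: "x \<noteq> y"
  obtain l1 m1 s1 where x: "x = cantor_point l1 m1 s1" using x unfolding scrambled_set_def by blast
  obtain l2 m2 s2 where y: "y = cantor_point l2 m2 s2" using y unfolding scrambled_set_def by blast
  have "(l1, s1, m1) \<noteq> (l2, s2, m2)" using ne x y by auto
  then show "\<not> (\<lambda>n. dist ((g ^^ n) x) ((g ^^ n) y)) \<longlonglongrightarrow> 0"
    "ereal sep \<le> limsup (\<lambda>n. ereal (dist ((g ^^ n) x) ((g ^^ n) y)))"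
    unfolding x y by (rule cantor_points_not_asymptotic, rule cantor_points_limsup)
qed

end

context excursion_construction
begin

text \<open>All the data of a coded family can be chosen: a dense sequence, long prefixes, prefix
  orbits through its points (surjectivity), and bridges onto the periodic orbit (mixing).\<close>
theorem scrambled_set_from_construction:
  "\<exists>T. T \<subseteq> Y \<and> Y \<subseteq> closure T \<and> mycielski_set T \<and> (g ^^ k) ` T \<subseteq> T \<and> synd_scrambled Y g sep T"
proof -
  obtain centre :: "nat \<Rightarrow> 'a" where centre: "\<And>i. centre i \<in> Y"
    "\<And>y e. y \<in> Y \<Longrightarrow> e > 0 \<Longrightarrow> \<exists>i. dist y (centre i) < e"
    using dense_sequence by blast
  have "\<forall>l::nat. \<exists>L. expansive_window L (1 / (real l + 1))"
    using uniform_expansivity by simp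
  then obtain pre_len where pre_len: "\<And>l. expansive_window (pre_len l) (1 / (real l + 1))"
    by metis
  have "\<forall>l. \<exists>Q. full_orbit Y g Q \<and> Q 0 = centre (fst (prod_decode l))"
    using full_orbit_through_point[OF centre(1)] by blast
  then obtain pre_orb where "\<forall>l. full_orbit Y g (pre_orb l) \<and> pre_orb l 0 = centre (fst (prod_decode l))"
    by metis
  then have pre_orb: "\<And>l. full_orbit Y g (pre_orb l)" "\<And>l. pre_orb l 0 = centre (fst (prod_decode l))"
    by auto
  have "\<forall>l. \<exists>c. admissible (pre_orb l) (pre_len l) c"
    using chain_exists[OF full_orbit_in[OF pre_orb(1)] P_in order.refl] pre_orb(1)
    unfolding admissible_def by blast
  then obtain bridge where "\<forall>l. admissible (pre_orb l) (pre_len l) (bridge l)" by metis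
  then interpret coded_family Y g \<beta> p k a0 D \<gamma> \<delta> N centre pre_len pre_orb bridge
    using centre pre_len pre_orb by unfold_locales auto
  show ?thesis
    using scrambled_set_subset scrambled_set_dense scrambled_set_mycielski
      scrambled_set_invariant scrambled_set_scrambled by blast
qed

end

context mixing_TA_system
begin

text \<open>Since \<open>Y\<close> is infinite, some point lies at positive distance from a given periodic orbit.\<close>
lemma point_far_from_periodic_orbit:
  assumes p: "k \<ge> 1" "(g^^k) p = p"
  shows "\<exists>a0\<in>Y. \<exists>D>0. \<forall>i. D \<le> dist a0 ((g^^i) p)"
proof -
  have "\<not> Y \<subseteq> (\<lambda>i. (g^^i) p) ` {..<k}" using Y_infinite finite_subset by blast
  then obtain a0 where a0: "a0 \<in> Y" "a0 \<notin> (\<lambda>i. (g^^i) p) ` {..<k}" by blast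
  define D where "D = Min ((\<lambda>i. dist a0 ((g^^i) p)) ` {..<k})"
  have "D > 0" unfolding D_def using a0(2) p(1) by (subst Min_gr_iff) (auto simp: lessThan_empty_iff)
  moreover have "D \<le> dist a0 ((g^^i) p)" for i
  proof -
    have "(g^^i) p = (g^^(i mod k)) p" using funpow_mod_eq[of k g p i] p(2) by simp
    moreover have "i mod k < k" using p(1) by simp
    ultimately show ?thesis unfolding D_def by (auto intro: Min_le)
  qed
  ultimately show ?thesis using a0(1) by blast
qed

theorem scrambled_set_exists:
  "\<exists>\<epsilon>>0. \<exists>k::nat. k > 0 \<and> (\<exists>T. T \<subseteq> Y \<and> Y \<subseteq> closure T \<and> mycielski_set T \<and>
           (g ^^ k) ` T \<subseteq> T \<and> synd_scrambled Y g \<epsilon> T)"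
proof -
  obtain p k where p: "p \<in> Y" "k \<ge> 1" "(g^^k) p = p" using periodic_point by blast
  obtain a0 D where a0: "a0 \<in> Y" "D > 0" "\<And>i. D \<le> dist a0 ((g^^i) p)"
    using point_far_from_periodic_orbit[OF p(2,3)] by blast
  define \<gamma> where "\<gamma> = min (\<beta>/2) (D/4)"
  have \<gamma>: "\<gamma> > 0" unfolding \<gamma>_def using beta_pos a0(2) by simp
  obtain \<delta> where \<delta>: "\<delta> > 0" "\<forall>y::int\<Rightarrow>'a. (\<forall>t. y t \<in> Y) \<and> (\<forall>t. dist (g (y t)) (y (t+1)) < \<delta>) \<longrightarrow>
      (\<exists>X. full_orbit Y g X \<and> (\<forall>t. dist (X t) (y t) \<le> \<gamma>))"
    using shadowing_bi_infinite[OF \<gamma>] by (elim exE conjE)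
  obtain N where N: "N \<ge> 2" "\<forall>x\<in>Y. \<forall>y\<in>Y. \<forall>n\<ge>N. \<exists>c. c 0 = x \<and> c n = y \<and> chain \<delta> n c"
    using mixing_chains[OF \<delta>(1)] by (elim exE conjE)
  interpret excursion_construction Y g \<beta> p k a0 D \<gamma> \<delta> N
    using p a0 \<gamma> \<delta> N by unfold_locales (auto simp: \<gamma>_def)
  have "k > 0" using p(2) by simp
  then show ?thesis using scrambled_set_from_construction sep_pos by blast
qed

end

theorem corollary4p15:
  fixes Y :: "'a::metric_space set" and g :: "'a \<Rightarrow> 'a"
  assumes "compact Y"
    and "\<exists>a\<in>Y. \<exists>b\<in>Y. a \<noteq> b"
    and "TA_map Y g"
    and "top_mixing Y g"
  shows "\<exists>\<epsilon>>0. \<exists>k::nat. k > 0 \<and> (\<exists>T. T \<subseteq> Y \<and> Y \<subseteq> closure T \<and> mycielski_set T \<and>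
           (g ^^ k) ` T \<subseteq> T \<and> synd_scrambled Y g \<epsilon> T)"
proof -
  from assms(3) obtain \<beta> where "continuous_on Y g" "g ` Y = Y" "c_expansive_with Y g \<beta>"
      "shadowing Y g"
    unfolding TA_map_def c_expansive_def continuous_surjection_def by blast
  then interpret mixing_TA_system Y g \<beta>
    using assms by unfold_locales auto
  show ?thesis by (rule scrambled_set_exists)
qed

end
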